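(* Let $Z=(U,\Omega,\mathcal I)$ be a $3$-matroid. The following are equivalent: (1) $Z$ is tight and binary; (2) $Z$ is tight and strictly binary; (3) $Z=\mathcal Z(Q)$ for some sheltering matroid $Q=(M,\Omega)$ such that there exist a finite set $V$, a symmetric $V\times V$ matrix $A$ over $GF(2)$, and a labelling $U=\{u_1(v),u_2(v),u_3(v): v\in V\}$ with $\Omega=\{\{u_1(v),u_2(v),u_3(v)\}: v\in V\}$, for which $M$ is the column matroid of the $GF(2)$-matrix $(I\mid A\mid A+I)$ (rows indexed by $V$) whose $v$-columns in the three blocks are labelled $u_1(v),u_2(v),u_3(v)$ respectively.
   Context: Let $\Omega$ be a partition of a finite set $U$. $T\subseteq U$ is a transversal (subtransversal) of $\Omega$ if $|T\cap\omega|=1$ ($\le 1$) for all $\omega\in\Omega$; $\mathcal S(\Omega)$ denotes the set of subtransversals. A skew pair of $\omega\in\Omega$ is a $2$-element subset of $\omega$. A multimatroid over $(U,\Omega)$ is a triple $Z=(U,\Omega,\mathcal I)$ with $\mathcal I\subseteq\mathcal S(\Omega)$ such that (i) for each transversal $T$, $\{I\in\mathcal I: I\subseteq T\}$ is the family of independent sets of a matroid on $T$, and (ii) for every $I\in\mathcal I$ and every skew pair $\{x,y\}$ of some $\omega\in\Omega$ with $\omega\cap I=\emptyset$, $I\cup\{x\}\in\mathcal I$ or $I\cup\{y\}\in\mathcal I$. $Z$ is a $q$-matroid if every $\omega\in\Omega$ has size $q$; it is nondegenerate if every $\omega$ has size $>1$. For $S\in\mathcal S(\Omega)$, its rank is the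 largest size of a member of $\mathcal I$ contained in $S$. $Z$ is tight if it is nondegenerate and for every $S\in\mathcal S(\Omega)$ with $|S|=|\Omega|-1$, letting $\omega$ be the class disjoint from $S$, there is $x\in\omega$ with rank$(S\cup\{x\})=$ rank$(S)$. A sheltering matroid is a pair $Q=(M,\Omega)$ where $M$ is a matroid on $U$ and $\Omega$ a partition of $U$ such that for every independent set $I\in\mathcal S(\Omega)$ of $M$ and every skew pair $\{x,y\}$ of a class $\omega$ with $\omega\cap I=\emptyset$, $I\cup\{x\}$ or $I\cup\{y\}$ is independent in $M$. Then $\mathcal Z(Q)=(U,\Omega,\{I\in\mathcal S(\Omega): I\text{ independent in }M\})$ is a multimatroid, said to be sheltered by $Q$. $Q$ is strict if $r(M)\le|\Omega|$. A multimatroid $Z$ is binary if $Z=\mathcal Z(Q)$ for some sheltering matroid $Q=(M,\Omega)$ with $M$ representable over $GF(2)$, and strictly binary if moreover $Q$ can be chosen strict. *)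

theory Defs
  imports Main "HOL-Library.Z2"
begin

definition is_partition :: "'a set \<Rightarrow> 'a set set \<Rightarrow> bool" where
  "is_partition U \<Omega> \<longleftrightarrow> (\<forall>\<omega>\<in>\<Omega>. \<omega> \<noteq> {}) \<and> \<Union>\<Omega> = U \<and>
     (\<forall>\<omega>\<in>\<Omega>. \<forall>\<omega>'\<in>\<Omega>. \<omega> \<noteq> \<omega>' \<longrightarrow> \<omega> \<inter> \<omega>' = {})"

definition subtransversals :: "'a set \<Rightarrow> 'a set set \<Rightarrow> 'a set set" where
  "subtransversals U \<Omega> = {T. T \<subseteq> U \<and> (\<forall>\<omega>\<in>\<Omega>. card (T \<inter> \<omega>) \<le> 1)}"

definition transversals :: "'a set \<Rightarrow> 'a set set \<Rightarrow> 'a set set" where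
  "transversals U \<Omega> = {T. T \<subseteq> U \<and> (\<forall>\<omega>\<in>\<Omega>. card (T \<inter> \<omega>) = 1)}"

definition matroid :: "'a set \<Rightarrow> 'a set set \<Rightarrow> bool" where
  "matroid E \<I> \<longleftrightarrow> finite E \<and> (\<forall>X\<in>\<I>. X \<subseteq> E) \<and> {} \<in> \<I> \<and>
     (\<forall>X Y. X \<in> \<I> \<and> Y \<subseteq> X \<longrightarrow> Y \<in> \<I>) \<and>
     (\<forall>X\<in>\<I>. \<forall>Y\<in>\<I>. card X < card Y \<longrightarrow> (\<exists>y\<in>Y - X. insert y X \<in> \<I>))"

definition matroid_rank :: "'a set set \<Rightarrow> nat" where
  "matroid_rank \<I> = Max (card ` \<I>)"

definition multimatroid :: "'a set \<Rightarrow> 'a set set \<Rightarrow> 'a set set \<Rightarrow> bool" where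
  "multimatroid U \<Omega> \<I> \<longleftrightarrow> finite U \<and> is_partition U \<Omega> \<and>
     \<I> \<subseteq> subtransversals U \<Omega> \<and>
     (\<forall>T\<in>transversals U \<Omega>. matroid T {I\<in>\<I>. I \<subseteq> T}) \<and>
     (\<forall>I\<in>\<I>. \<forall>\<omega>\<in>\<Omega>. \<forall>x\<in>\<omega>. \<forall>y\<in>\<omega>. x \<noteq> y \<and> \<omega> \<inter> I = {} \<longrightarrow>
         insert x I \<in> \<I> \<or> insert y I \<in> \<I>)"

definition q_matroid :: "nat \<Rightarrow> 'a set \<Rightarrow> 'a set set \<Rightarrow> 'a set set \<Rightarrow> bool" where
  "q_matroid q U \<Omega> \<I> \<longleftrightarrow> multimatroid U \<Omega> \<I> \<and> (\<forall>\<omega>\<in>\<Omega>. card \<omega> = q)"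

definition nondegenerate :: "'a set set \<Rightarrow> bool" where
  "nondegenerate \<Omega> \<longleftrightarrow> (\<forall>\<omega>\<in>\<Omega>. card \<omega> > 1)"

definition mm_rank :: "'a set set \<Rightarrow> 'a set \<Rightarrow> nat" where
  "mm_rank \<I> S = Max {card I | I. I \<in> \<I> \<and> I \<subseteq> S}"

definition tight :: "'a set \<Rightarrow> 'a set set \<Rightarrow> 'a set set \<Rightarrow> bool" where
  "tight U \<Omega> \<I> \<longleftrightarrow> nondegenerate \<Omega> \<and>
     (\<forall>S\<in>subtransversals U \<Omega>. card S = card \<Omega> - 1 \<longrightarrow>
        (\<forall>\<omega>\<in>\<Omega>. \<omega> \<inter> S = {} \<longrightarrow> (\<exists>x\<in>\<omega>. mm_rank \<I> (insert x S) = mm_rank \<I> S)))"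

definition sheltering :: "'a set \<Rightarrow> 'a set set \<Rightarrow> 'a set set \<Rightarrow> bool" where
  "sheltering U M \<Omega> \<longleftrightarrow> matroid U M \<and> is_partition U \<Omega> \<and>
     (\<forall>I\<in>M \<inter> subtransversals U \<Omega>. \<forall>\<omega>\<in>\<Omega>. \<forall>x\<in>\<omega>. \<forall>y\<in>\<omega>. x \<noteq> y \<and> \<omega> \<inter> I = {} \<longrightarrow>
         insert x I \<in> M \<or> insert y I \<in> M)"

definition sheltered_indep :: "'a set \<Rightarrow> 'a set set \<Rightarrow> 'a set set \<Rightarrow> 'a set set" where
  "sheltered_indep U M \<Omega> = {I \<in> subtransversals U \<Omega>. I \<in> M}"

definition strict_sheltering :: "'a set \<Rightarrow> 'a set set \<Rightarrow> 'a set set \<Rightarrow> bool" where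
  "strict_sheltering U M \<Omega> \<longleftrightarrow> sheltering U M \<Omega> \<and> matroid_rank M \<le> card \<Omega>"

definition gf2_indep :: "('a \<Rightarrow> 'r \<Rightarrow> bit) \<Rightarrow> 'a set \<Rightarrow> bool" where
  "gf2_indep col X \<longleftrightarrow> (\<forall>c :: 'a \<Rightarrow> bit. (\<forall>i. (\<Sum>x\<in>X. c x * col x i) = 0) \<longrightarrow> (\<forall>x\<in>X. c x = 0))"

definition column_matroid :: "'a set \<Rightarrow> ('a \<Rightarrow> 'r \<Rightarrow> bit) \<Rightarrow> 'a set set" where
  "column_matroid U col = {X. X \<subseteq> U \<and> gf2_indep col X}"

definition binary_matroid :: "'a set \<Rightarrow> 'a set set \<Rightarrow> bool" where
  "binary_matroid U M \<longleftrightarrow> (\<exists>(n::nat) (col :: 'a \<Rightarrow> nat \<Rightarrow> bit).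
      (\<forall>x i. n \<le> i \<longrightarrow> col x i = 0) \<and> M = column_matroid U col)"

definition binary_mm :: "'a set \<Rightarrow> 'a set set \<Rightarrow> 'a set set \<Rightarrow> bool" where
  "binary_mm U \<Omega> \<I> \<longleftrightarrow> (\<exists>M. sheltering U M \<Omega> \<and> binary_matroid U M \<and>
      \<I> = sheltered_indep U M \<Omega>)"

definition strictly_binary_mm :: "'a set \<Rightarrow> 'a set set \<Rightarrow> 'a set set \<Rightarrow> bool" where
  "strictly_binary_mm U \<Omega> \<I> \<longleftrightarrow> (\<exists>M. strict_sheltering U M \<Omega> \<and> binary_matroid U M \<and>
      \<I> = sheltered_indep U M \<Omega>)"

text \<open>Columns of the matrix (I | A | A + I) with rows indexed by V: the v-column of block k
  (k = 1,2,3) is labelled u k v.\<close>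

definition IAAI_col :: "('v \<Rightarrow> 'v \<Rightarrow> bit) \<Rightarrow> nat \<Rightarrow> 'v \<Rightarrow> 'v \<Rightarrow> bit" where
  "IAAI_col A k v = (\<lambda>w. if k = 1 then (if w = v then 1 else 0)
                         else if k = 2 then A w v
                         else A w v + (if w = v then 1 else 0))"

definition IAAI_sheltered :: "'a set \<Rightarrow> 'a set set \<Rightarrow> 'a set set \<Rightarrow> bool" where
  "IAAI_sheltered U \<Omega> \<I> \<longleftrightarrow> (\<exists>M. sheltering U M \<Omega> \<and> \<I> = sheltered_indep U M \<Omega> \<and>
     (\<exists>(V :: nat set) (A :: nat \<Rightarrow> nat \<Rightarrow> bit) (u :: nat \<Rightarrow> nat \<Rightarrow> 'a) (col :: 'a \<Rightarrow> nat \<Rightarrow> bit).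
        finite V \<and> (\<forall>v\<in>V. \<forall>w\<in>V. A v w = A w v) \<and>
        inj_on (\<lambda>(k, v). u k v) ({1,2,3} \<times> V) \<and>
        U = (\<lambda>(k, v). u k v) ` ({1,2,3} \<times> V) \<and>
        \<Omega> = {{u 1 v, u 2 v, u 3 v} | v. v \<in> V} \<and>
        (\<forall>k\<in>{1,2,3}. \<forall>v\<in>V. \<forall>w\<in>V. col (u k v) w = IAAI_col A k v w) \<and>
        (\<forall>x\<in>U. \<forall>w. w \<notin> V \<longrightarrow> col x w = 0) \<and>
        M = column_matroid U col))"

end

theory Submission
  imports Defs
begin

text \<open>For (3) implies (2), symmetry of A makes
  x^T A y + y^T A x vanish over GF(2); this forces that one of the three columns of (I | A | A + I)
  at a vertex is spanned by any choice of columns at the other vertices, which gives tightness,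
  and that the first two are never both spanned, which gives the sheltering axiom; strictness
  holds since the matrix has |V| rows.

  For (1) implies (3), fix a binary representation and an independent transversal T0. In each
  class, with t its element in T0, tightness provides an element a such that T0 - t + a is
  dependent; call the third element b. The coordinates of the a-columns in the basis of the
  t-columns form a matrix A with zero diagonal, and the skew-pair axiom forces A to be symmetric.
  The multimatroid sheltered by (I | A | A + I) agrees with the given one on all subtransversals
  avoiding the b-elements, and two tight multimatroids with classes of size at least three that
  agree there coincide, by induction on the number of b-elements.\<close>

section \<open>Linear algebra of GF(2) columns\<close>

(* The Z2 library rewrites + and * on bit into XOR and AND, which defeats ring reasoning. *)
declare add_bit_eq_xor [simp del] mult_bit_eq_and [simp del]

lemma bit_zero_or_one: "(b::bit) = 0 \<or> b = 1"
  by (cases b) auto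

lemma bit_add_self [simp]: "(x::bit) + x = 0"
  by (cases x) simp_all

lemma bit_add_eq_0_iff: "(x::bit) + y = 0 \<longleftrightarrow> x = y"
  by (cases x; cases y) simp_all

lemma bit_add_solve: "(a::bit) = b + c \<Longrightarrow> c = a + b"
  by (cases a; cases b; cases c) simp_all

lemma sum_eq_single_nonzero:
  assumes "finite V" "v \<in> V" "\<And>i. i \<in> V - {v} \<Longrightarrow> F i = 0"
  shows "(\<Sum>i\<in>V. F i) = (F v :: 'b::comm_monoid_add)"
  using assms by (simp add: sum.remove)

lemma sum_indicator_mult:
  assumes "finite V" "i \<in> V"
  shows "(\<Sum>j\<in>V. (if j = i then 1 else 0) * (f j::bit)) = f i"
proof -
  have e: "\<And>j. (if j = i then 1 else 0) * f j = (if j = i then f i else 0)" by simp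
  show ?thesis unfolding e using assms by (simp add: sum.delta)
qed

lemma sum_mult_indicator:
  assumes "finite V" "i \<in> V"
  shows "(\<Sum>j\<in>V. (f j::bit) * (if j = i then 1 else 0)) = f i"
  using sum_indicator_mult[OF assms, of f] by (simp add: mult.commute)

definition gf2_comb :: "('a \<Rightarrow> 'r \<Rightarrow> bit) \<Rightarrow> 'a set \<Rightarrow> ('a \<Rightarrow> bit) \<Rightarrow> 'r \<Rightarrow> bit" where
  "gf2_comb col X c = (\<lambda>i. \<Sum>x\<in>X. c x * col x i)"

definition gf2_span :: "('a \<Rightarrow> 'r \<Rightarrow> bit) \<Rightarrow> 'a set \<Rightarrow> ('r \<Rightarrow> bit) set" where
  "gf2_span col X = {f. \<exists>c. f = gf2_comb col X c}"

lemma gf2_indep_iff_comb: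
  "gf2_indep col X \<longleftrightarrow> (\<forall>c. gf2_comb col X c = (\<lambda>_. 0) \<longrightarrow> (\<forall>x\<in>X. c x = 0))"
  unfolding gf2_indep_def gf2_comb_def by (simp add: fun_eq_iff)

lemma gf2_comb_insert:
  "finite X \<Longrightarrow> x \<notin> X \<Longrightarrow> gf2_comb col (insert x X) c = (\<lambda>i. c x * col x i + gf2_comb col X c i)"
  unfolding gf2_comb_def by (simp add: sum.insert)

lemma gf2_comb_cong: "(\<And>x. x \<in> X \<Longrightarrow> c x = d x) \<Longrightarrow> gf2_comb col X c = gf2_comb col X d"
  unfolding gf2_comb_def by (auto intro!: sum.cong)

lemma gf2_comb_empty[simp]: "gf2_comb col {} c = (\<lambda>_. 0)"
  unfolding gf2_comb_def by simp

lemma gf2_span_empty: "gf2_span col {} = {\<lambda>_. 0}"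
  unfolding gf2_span_def by simp

lemma gf2_comb_extend_zero:
  assumes "finite X" "Y \<subseteq> X"
  shows "gf2_comb col Y c = gf2_comb col X (\<lambda>x. if x \<in> Y then c x else 0)"
  unfolding gf2_comb_def
proof
  fix i
  show "(\<Sum>x\<in>Y. c x * col x i) = (\<Sum>x\<in>X. (if x \<in> Y then c x else 0) * col x i)"
    using assms by (intro sum.mono_neutral_cong_left) auto
qed

lemma gf2_indep_subset:
  assumes "gf2_indep col X" "Y \<subseteq> X" "finite X"
  shows "gf2_indep col Y"
  unfolding gf2_indep_iff_comb
proof (intro allI impI ballI)
  fix c x assume h: "gf2_comb col Y c = (\<lambda>_. 0)" and x: "x \<in> Y"
  have "gf2_comb col X (\<lambda>x. if x \<in> Y then c x else 0) = (\<lambda>_. 0)"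
    using h gf2_comb_extend_zero[OF assms(3,2)] by metis
  then have "\<forall>z\<in>X. (if z \<in> Y then c z else 0) = 0" using assms(1) unfolding gf2_indep_iff_comb by blast
  then show "c x = 0" using x assms(2) by force
qed

lemma gf2_indep_empty[simp]: "gf2_indep col {}"
  unfolding gf2_indep_def by simp

lemma gf2_span_self: "finite X \<Longrightarrow> x \<in> X \<Longrightarrow> col x \<in> gf2_span col X"
proof -
  assume "finite X" "x \<in> X"
  have e: "\<And>z i. (if z = x then 1 else 0) * col z i = (if z = x then col x i else 0)" by simp
  have "col x = gf2_comb col X (\<lambda>z. if z = x then 1 else 0)"
    unfolding gf2_comb_def e using \<open>finite X\<close> \<open>x \<in> X\<close> by (simp add: sum.delta)
  then show ?thesis unfolding gf2_span_def by blast
qed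

lemma gf2_comb_upd: "x \<notin> X \<Longrightarrow> gf2_comb col X (c(x:=a)) = gf2_comb col X c"
  by (rule gf2_comb_cong) auto

lemma gf2_span_add: "f \<in> gf2_span col X \<Longrightarrow> g \<in> gf2_span col X \<Longrightarrow> (\<lambda>i. f i + g i) \<in> gf2_span col X"
  unfolding gf2_span_def gf2_comb_def
proof clarify
  fix c d
  have "(\<lambda>i. (\<Sum>x\<in>X. c x * col x i) + (\<Sum>x\<in>X. d x * col x i)) = (\<lambda>i. \<Sum>x\<in>X. (c x + d x) * col x i)"
    by (simp add: sum.distrib distrib_right)
  then show "\<exists>e. (\<lambda>i. (\<Sum>x\<in>X. c x * col x i) + (\<Sum>x\<in>X. d x * col x i)) = (\<lambda>i. \<Sum>x\<in>X. e x * col x i)"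
    by (intro exI[of _ "\<lambda>x. c x + d x"])
qed

lemma gf2_span_mono: "finite X \<Longrightarrow> Y \<subseteq> X \<Longrightarrow> gf2_span col Y \<subseteq> gf2_span col X"
  unfolding gf2_span_def using gf2_comb_extend_zero by blast

lemma gf2_span_insert:
  assumes "finite X" "x \<notin> X"
  shows "f \<in> gf2_span col (insert x X) \<longleftrightarrow> f \<in> gf2_span col X \<or> (\<lambda>i. f i + col x i) \<in> gf2_span col X"
proof
  assume "f \<in> gf2_span col (insert x X)"
  then obtain c where c: "f = gf2_comb col (insert x X) c" unfolding gf2_span_def by blast
  have f: "f = (\<lambda>i. c x * col x i + gf2_comb col X c i)" using c gf2_comb_insert[OF assms] by simp
  show "f \<in> gf2_span col X \<or> (\<lambda>i. f i + col x i) \<in> gf2_span col X"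
  proof (cases "c x = 0")
    case True
    then show ?thesis using f unfolding gf2_span_def by auto
  next
    case False
    then have "c x = 1" using bit_zero_or_one by blast
    then have "(\<lambda>i. f i + col x i) = gf2_comb col X c" using f by (simp add: fun_eq_iff add.assoc[symmetric] add.commute)
    then show ?thesis unfolding gf2_span_def by blast
  qed
next
  assume "f \<in> gf2_span col X \<or> (\<lambda>i. f i + col x i) \<in> gf2_span col X"
  then show "f \<in> gf2_span col (insert x X)"
  proof
    assume "f \<in> gf2_span col X"
    then show ?thesis using gf2_span_mono[of "insert x X" X col] assms by blast
  next
    assume "(\<lambda>i. f i + col x i) \<in> gf2_span col X"
    then obtain c where c: "(\<lambda>i. f i + col x i) = gf2_comb col X c" unfolding gf2_span_def by blast
    have "gf2_comb col (insert x X) (c(x:=1)) = (\<lambda>i. col x i + gf2_comb col X c i)"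
      using gf2_comb_insert[OF assms, of col "c(x:=1)"] gf2_comb_upd[OF assms(2), of col c 1] by simp
    also have "\<dots> = f" using c by (simp add: fun_eq_iff) (metis add.commute add.left_cancel bit_add_self add_0_right add.assoc)
    finally show ?thesis unfolding gf2_span_def by blast
  qed
qed

lemma gf2_indep_insert:
  assumes "finite X" "x \<notin> X" "gf2_indep col X"
  shows "gf2_indep col (insert x X) \<longleftrightarrow> col x \<notin> gf2_span col X"
proof
  assume ind: "gf2_indep col (insert x X)"
  show "col x \<notin> gf2_span col X"
  proof
    assume "col x \<in> gf2_span col X"
    then obtain c where c: "col x = gf2_comb col X c" unfolding gf2_span_def by blast
    have "gf2_comb col (insert x X) (c(x:=1)) = (\<lambda>i. col x i + gf2_comb col X c i)"
      using gf2_comb_insert[OF assms(1,2), of col "c(x:=1)"] gf2_comb_upd[OF assms(2), of col c 1] by simp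
    also have "\<dots> = (\<lambda>_. 0)" using c by simp
    finally have "(c(x:=1)) x = 0" using ind unfolding gf2_indep_iff_comb by blast
    then show False by simp
  qed
next
  assume nsp: "col x \<notin> gf2_span col X"
  show "gf2_indep col (insert x X)" unfolding gf2_indep_iff_comb
  proof (intro allI impI)
    fix c assume h: "gf2_comb col (insert x X) c = (\<lambda>_. 0)"
    then have h2: "\<And>i. c x * col x i + gf2_comb col X c i = 0" using gf2_comb_insert[OF assms(1,2)] by metis
    have cx: "c x = 0"
    proof (rule ccontr)
      assume "c x \<noteq> 0" then have "c x = 1" using bit_zero_or_one by blast
      then have "col x = gf2_comb col X c" using h2 by (simp add: fun_eq_iff bit_add_eq_0_iff)
      then show False using nsp unfolding gf2_span_def by blast
    qed
    then have "gf2_comb col X c = (\<lambda>_. 0)" using h2 by (simp add: fun_eq_iff)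
    then have "\<forall>z\<in>X. c z = 0" using assms(3) unfolding gf2_indep_iff_comb by blast
    then show "\<forall>z\<in>insert x X. c z = 0" using cx by simp
  qed
qed


lemma gf2_indep_eliminate_row:
  assumes "finite X" "gf2_indep col X" "x0 \<in> X" "col x0 i = 1"
  shows "gf2_indep (\<lambda>x j. col x j + col x i * col x0 j) (X - {x0})"
  unfolding gf2_indep_iff_comb
proof (intro allI impI)
  let ?X' = "X - {x0}"
  have X: "X = insert x0 ?X'" "x0 \<notin> ?X'" "finite ?X'" using assms(1,3) by auto
  fix c assume c: "gf2_comb (\<lambda>x j. col x j + col x i * col x0 j) ?X' c = (\<lambda>_. 0)"
  define s where "s = (\<Sum>x\<in>?X'. c x * col x i)"
  have "gf2_comb (\<lambda>x j. col x j + col x i * col x0 j) ?X' c = (\<lambda>j. gf2_comb col ?X' c j + s * col x0 j)"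
    unfolding gf2_comb_def s_def by (simp add: distrib_left sum.distrib sum_distrib_right mult.assoc)
  then have "gf2_comb col X (c(x0 := s)) = (\<lambda>_. 0)"
    using c gf2_comb_insert[OF X(3,2), of col "c(x0 := s)"] gf2_comb_upd[OF X(2), of col c s] X(1)
    by (simp add: fun_eq_iff add.commute)
  then have "\<forall>x\<in>X. (c(x0 := s)) x = 0" using assms(2) unfolding gf2_indep_iff_comb by blast
  then show "\<forall>x\<in>?X'. c x = 0" by (metis DiffE fun_upd_other insertCI)
qed

lemma gf2_indep_card_le_rows:
  fixes col :: "'a \<Rightarrow> 'r \<Rightarrow> bit"
  assumes "finite V"
  shows "finite X \<Longrightarrow> gf2_indep col X \<Longrightarrow> \<forall>x\<in>X. \<forall>i. i \<notin> V \<longrightarrow> col x i = 0 \<Longrightarrow> card X \<le> card V"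
  using assms
proof (induction V arbitrary: col X rule: finite_induct)
  case empty
  then have "gf2_comb col X (\<lambda>_. 1) = (\<lambda>_. 0)" unfolding gf2_comb_def by (simp add: fun_eq_iff)
  then have "X = {}" using empty.prems(2) unfolding gf2_indep_iff_comb by fastforce
  then show ?case by simp
next
  case (insert i V)
  show ?case
  proof (cases "\<forall>x\<in>X. col x i = 0")
    case True
    then have "\<forall>x\<in>X. \<forall>j. j \<notin> V \<longrightarrow> col x j = 0" using insert.prems(3) by (metis insert_iff)
    then have "card X \<le> card V" using insert.IH insert.prems by blast
    then show ?thesis using insert.hyps by simp
  next
    case False
    then obtain x0 where x0: "x0 \<in> X" "col x0 i = 1" by auto
    have "\<forall>x\<in>X - {x0}. \<forall>j. j \<notin> V \<longrightarrow> col x j + col x i * col x0 j = 0"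
    proof (intro ballI allI impI)
      fix x j assume "x \<in> X - {x0}" "j \<notin> V"
      then show "col x j + col x i * col x0 j = 0"
        using insert.prems(3) x0 by (cases "j = i") auto
    qed
    then have "card (X - {x0}) \<le> card V"
      using insert.IH[OF _ gf2_indep_eliminate_row[OF insert.prems(1,2) x0]] insert.prems(1) by blast
    then show ?thesis using x0(1) insert.prems(1) insert.hyps by (simp add: card_Diff_singleton)
  qed
qed

lemma gf2_span_trans:
  assumes "\<forall>y\<in>Y. col y \<in> gf2_span col X"
  shows "gf2_span col Y \<subseteq> gf2_span col X"
proof
  fix f assume "f \<in> gf2_span col Y"
  then obtain d where d: "f = gf2_comb col Y d" unfolding gf2_span_def by blast
  have "\<forall>y\<in>Y. \<exists>c. col y = gf2_comb col X c" using assms unfolding gf2_span_def by blast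
  then obtain cf where cf: "\<forall>y\<in>Y. col y = gf2_comb col X (cf y)" by metis
  have "f = gf2_comb col X (\<lambda>x. \<Sum>y\<in>Y. d y * cf y x)"
  proof
    fix i
    have "f i = (\<Sum>y\<in>Y. d y * (\<Sum>x\<in>X. cf y x * col x i))"
      unfolding d gf2_comb_def using cf by (auto intro!: sum.cong simp: gf2_comb_def)
    also have "\<dots> = (\<Sum>x\<in>X. (\<Sum>y\<in>Y. d y * cf y x) * col x i)"
      by (simp add: sum_distrib_left sum_distrib_right mult.assoc) (rule sum.swap)
    finally show "f i = gf2_comb col X (\<lambda>x. \<Sum>y\<in>Y. d y * cf y x) i" unfolding gf2_comb_def .
  qed
  then show "f \<in> gf2_span col X" unfolding gf2_span_def by blast
qed

text \<open>Steinitz exchange: the coefficient vectors of Y with respect to X, viewed as columns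
  indexed by X, are again independent, so the row bound applies.\<close>

lemma gf2_indep_card_le_span:
  fixes col :: "'a \<Rightarrow> 'r \<Rightarrow> bit"
  assumes "finite X" "finite Y" "gf2_indep col Y" "\<forall>y\<in>Y. col y \<in> gf2_span col X"
  shows "card Y \<le> card X"
proof -
  have "\<forall>y\<in>Y. \<exists>c. col y = gf2_comb col X c" using assms(4) unfolding gf2_span_def by blast
  then obtain cf where cf: "\<forall>y\<in>Y. col y = gf2_comb col X (cf y)" by metis
  define colr where "colr = (\<lambda>y x. if x \<in> X then cf y x else (0::bit))"
  have ind: "gf2_indep colr Y"
    unfolding gf2_indep_iff_comb
  proof (intro allI impI)
    fix d assume h: "gf2_comb colr Y d = (\<lambda>_. 0)"
    have "gf2_comb col Y d = (\<lambda>_. 0)"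
    proof
      fix i
      have "gf2_comb col Y d i = (\<Sum>y\<in>Y. d y * (\<Sum>x\<in>X. cf y x * col x i))"
        unfolding gf2_comb_def using cf by (auto intro!: sum.cong simp: gf2_comb_def)
      also have "\<dots> = (\<Sum>x\<in>X. (\<Sum>y\<in>Y. d y * cf y x) * col x i)"
        by (simp add: sum_distrib_left sum_distrib_right mult.assoc) (rule sum.swap)
      also have "\<dots> = (\<Sum>x\<in>X. gf2_comb colr Y d x * col x i)"
        unfolding gf2_comb_def colr_def by (auto intro!: sum.cong)
      also have "\<dots> = 0" using h by simp
      finally show "gf2_comb col Y d i = 0" .
    qed
    then show "\<forall>y\<in>Y. d y = 0" using assms(3) unfolding gf2_indep_iff_comb by blast
  qed
  show ?thesis
    by (rule gf2_indep_card_le_rows[OF assms(1) assms(2) ind]) (simp add: colr_def)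
qed

lemma matroid_column_matroid:
  assumes "finite U"
  shows "matroid U (column_matroid U col)"
  unfolding matroid_def column_matroid_def
proof (intro conjI allI impI ballI)
  show "finite U" by fact
  show "{} \<in> {X. X \<subseteq> U \<and> gf2_indep col X}" by simp
next
  fix X Y assume "X \<in> {X. X \<subseteq> U \<and> gf2_indep col X} \<and> Y \<subseteq> X"
  then show "Y \<in> {X. X \<subseteq> U \<and> gf2_indep col X}"
    using gf2_indep_subset assms finite_subset by blast
next
  fix X Y assume X: "X \<in> {X. X \<subseteq> U \<and> gf2_indep col X}" and Y: "Y \<in> {X. X \<subseteq> U \<and> gf2_indep col X}"
    and c: "card X < card Y"
  have fX: "finite X" "finite Y" using X Y assms finite_subset by auto
  show "\<exists>y\<in>Y - X. insert y X \<in> {X. X \<subseteq> U \<and> gf2_indep col X}"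
  proof (rule ccontr)
    assume "\<not> ?thesis"
    then have "\<forall>y\<in>Y - X. \<not> gf2_indep col (insert y X)" using X Y by auto
    then have "\<forall>y\<in>Y - X. col y \<in> gf2_span col X" using gf2_indep_insert[OF fX(1)] X by auto
    then have "\<forall>y\<in>Y. col y \<in> gf2_span col X" using gf2_span_self[OF fX(1)] by blast
    then have "card Y \<le> card X" using gf2_indep_card_le_span[OF fX(1) fX(2)] Y by blast
    then show False using c by simp
  qed
next
  fix X assume "X \<in> {X. X \<subseteq> U \<and> gf2_indep col X}" then show "X \<subseteq> U" by simp
qed

definition gf2_dot :: "'r set \<Rightarrow> ('r \<Rightarrow> bit) \<Rightarrow> ('r \<Rightarrow> bit) \<Rightarrow> bit" where
  "gf2_dot V y f = (\<Sum>i\<in>V. y i * f i)"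

lemma gf2_dot_add_left: "gf2_dot V (\<lambda>i. y1 i + y2 i) f = gf2_dot V y1 f + gf2_dot V y2 f"
  unfolding gf2_dot_def by (simp add: distrib_right sum.distrib)

lemma gf2_dot_add_right: "gf2_dot V y (\<lambda>i. f i + g i) = gf2_dot V y f + gf2_dot V y g"
  unfolding gf2_dot_def by (simp add: distrib_left sum.distrib)

lemma gf2_separating_vector:
  fixes col :: "'a \<Rightarrow> 'r \<Rightarrow> bit"
  assumes "finite V" "finite X"
  shows "(\<forall>x\<in>X. \<forall>i. i \<notin> V \<longrightarrow> col x i = 0) \<Longrightarrow> (\<forall>i. i \<notin> V \<longrightarrow> z i = 0) \<Longrightarrow> z \<notin> gf2_span col X \<Longrightarrow>
     \<exists>y. (\<forall>x\<in>X. gf2_dot V y (col x) = 0) \<and> gf2_dot V y z = 1"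
  using assms(2)
proof (induction X arbitrary: z rule: finite_induct)
  case empty
  then have "z \<noteq> (\<lambda>_. 0)" using gf2_span_empty by blast
  then obtain i where i: "z i \<noteq> 0" by (meson ext)
  then have iV: "i \<in> V" using empty.prems(2) by blast
  have "gf2_dot V (\<lambda>j. if j = i then 1 else 0) z = z i"
    unfolding gf2_dot_def using sum_indicator_mult[OF assms(1) iV] .
  then show ?case using i bit_zero_or_one by (metis empty_iff)
next
  case (insert x X)
  have n1: "z \<notin> gf2_span col X" using insert.prems(3) gf2_span_insert[OF insert.hyps] by blast
  have n2: "(\<lambda>i. z i + col x i) \<notin> gf2_span col X" using insert.prems(3) gf2_span_insert[OF insert.hyps] by blast
  have s1: "\<forall>x\<in>X. \<forall>i. i \<notin> V \<longrightarrow> col x i = 0" using insert.prems(1) by blast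
  obtain y1 where y1: "\<forall>x\<in>X. gf2_dot V y1 (col x) = 0" "gf2_dot V y1 z = 1"
    using insert.IH[OF s1 insert.prems(2) n1] by blast
  have s2: "\<forall>i. i \<notin> V \<longrightarrow> z i + col x i = 0" using insert.prems(1,2) by simp
  obtain y2 where y2: "\<forall>x\<in>X. gf2_dot V y2 (col x) = 0" "gf2_dot V y2 (\<lambda>i. z i + col x i) = 1"
    using insert.IH[OF s1 s2 n2] by blast
  have y2': "gf2_dot V y2 z + gf2_dot V y2 (col x) = 1" using y2(2) gf2_dot_add_right[of V y2 z "col x"] by simp
  show ?case
  proof (cases "gf2_dot V y1 (col x) = 0")
    case True then show ?thesis using y1 by auto
  next
    case False
    then have a1: "gf2_dot V y1 (col x) = 1" using bit_zero_or_one by blast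
    show ?thesis
    proof (cases "gf2_dot V y2 (col x) = 0")
      case True
      then show ?thesis using y2 y2' by auto
    next
      case False
      then have a2: "gf2_dot V y2 (col x) = 1" using bit_zero_or_one by blast
      then have a3: "gf2_dot V y2 z = 0" using y2' by (metis add_cancel_left_left add_right_cancel bit_add_self)
      have "\<forall>x'\<in>insert x X. gf2_dot V (\<lambda>i. y1 i + y2 i) (col x') = 0"
        using y1 y2 a1 a2 by (auto simp: gf2_dot_add_left)
      moreover have "gf2_dot V (\<lambda>i. y1 i + y2 i) z = 1" using y1 a3 by (simp add: gf2_dot_add_left)
      ultimately show ?thesis by blast
    qed
  qed
qed

lemma gf2_span_reindex:
  assumes "inj_on h P" "\<forall>w\<in>P. col (h w) = g w"
  shows "gf2_span col (h ` P) = gf2_span g P"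
proof (intro equalityI subsetI)
  fix f assume "f \<in> gf2_span col (h ` P)"
  then obtain c where c: "f = gf2_comb col (h ` P) c" unfolding gf2_span_def by blast
  have "gf2_comb col (h ` P) c = gf2_comb g P (\<lambda>w. c (h w))"
    unfolding gf2_comb_def
  proof (rule ext, rule sum.reindex_cong[OF assms(1) refl])
    fix i w assume "w \<in> P"
    then show "c (h w) * col (h w) i = c (h w) * g w i" using assms(2) by simp
  qed
  then show "f \<in> gf2_span g P" using c unfolding gf2_span_def by blast
next
  fix f assume "f \<in> gf2_span g P"
  then obtain d where d: "f = gf2_comb g P d" unfolding gf2_span_def by blast
  have "gf2_comb col (h ` P) (\<lambda>x. d (inv_into P h x)) = gf2_comb g P d"
    unfolding gf2_comb_def
  proof (rule ext, rule sum.reindex_cong[OF assms(1) refl])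
    fix i w assume w: "w \<in> P"
    then show "d (inv_into P h (h w)) * col (h w) i = d w * g w i"
      using assms(2) inv_into_f_f[OF assms(1) w] by simp
  qed
  then show "f \<in> gf2_span col (h ` P)" using d unfolding gf2_span_def by (metis (mono_tags, lifting) mem_Collect_eq)
qed

lemma gf2_span_cong: "(\<And>x. x \<in> X \<Longrightarrow> col x = col' x) \<Longrightarrow> gf2_span col X = gf2_span col' X"
  unfolding gf2_span_def gf2_comb_def by (auto intro!: sum.cong)

lemma gf2_indep_cong: "(\<And>x. x \<in> X \<Longrightarrow> col x = col' x) \<Longrightarrow> gf2_indep col X \<longleftrightarrow> gf2_indep col' X"
  unfolding gf2_indep_def by (metis (no_types, lifting) sum.cong)

lemma gf2_indep_reindex:
  assumes "inj_on h P"
  shows "gf2_indep col (h ` P) \<longleftrightarrow> gf2_indep (\<lambda>w. col (h w)) P"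
proof
  assume a: "gf2_indep col (h ` P)"
  show "gf2_indep (\<lambda>w. col (h w)) P" unfolding gf2_indep_iff_comb
  proof (intro allI impI ballI)
    fix c w assume c: "gf2_comb (\<lambda>w. col (h w)) P c = (\<lambda>_. 0)" and w: "w \<in> P"
    have "gf2_comb col (h ` P) (\<lambda>x. c (inv_into P h x)) = gf2_comb (\<lambda>w. col (h w)) P c"
      unfolding gf2_comb_def
    proof (rule ext, rule sum.reindex_cong[OF assms refl])
      fix i w assume w: "w \<in> P"
      then show "c (inv_into P h (h w)) * col (h w) i = c w * col (h w) i"
        using inv_into_f_f[OF assms w] by simp
    qed
    then have z: "gf2_comb col (h ` P) (\<lambda>x. c (inv_into P h x)) = (\<lambda>_. 0)" using c by simp
    have "\<forall>x\<in>h ` P. c (inv_into P h x) = 0" using a z unfolding gf2_indep_iff_comb by blast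
    then have "c (inv_into P h (h w)) = 0" using w by blast
    then show "c w = 0" using inv_into_f_f[OF assms w] by simp
  qed
next
  assume a: "gf2_indep (\<lambda>w. col (h w)) P"
  show "gf2_indep col (h ` P)" unfolding gf2_indep_iff_comb
  proof (intro allI impI ballI)
    fix c x assume c: "gf2_comb col (h ` P) c = (\<lambda>_. 0)" and x: "x \<in> h ` P"
    have "gf2_comb col (h ` P) c = gf2_comb (\<lambda>w. col (h w)) P (\<lambda>w. c (h w))"
      unfolding gf2_comb_def by (rule ext, rule sum.reindex_cong[OF assms refl]) simp
    then have z: "gf2_comb (\<lambda>w. col (h w)) P (\<lambda>w. c (h w)) = (\<lambda>_. 0)" using c by simp
    have "\<forall>w\<in>P. c (h w) = 0" using a z unfolding gf2_indep_iff_comb by blast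
    then show "c x = 0" using x by blast
  qed
qed

lemma gf2_indep_coordinates:
  fixes col :: "'a \<Rightarrow> 'r \<Rightarrow> bit" and coord :: "'a \<Rightarrow> 'v \<Rightarrow> bit"
  assumes basis: "gf2_indep basis V"
    and co: "\<forall>x\<in>X. col x = (\<lambda>r. \<Sum>i\<in>V. coord x i * basis i r)"
    and sp: "\<forall>x\<in>X. \<forall>i. i \<notin> V \<longrightarrow> coord x i = 0"
  shows "gf2_indep col X \<longleftrightarrow> gf2_indep coord X"
proof -
  have key: "gf2_comb col X c = gf2_comb basis V (gf2_comb coord X c)" for c
  proof
    fix r
    have "gf2_comb col X c r = (\<Sum>x\<in>X. c x * (\<Sum>i\<in>V. coord x i * basis i r))"
      unfolding gf2_comb_def using co by (intro sum.cong) auto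
    also have "\<dots> = (\<Sum>i\<in>V. (\<Sum>x\<in>X. c x * coord x i) * basis i r)"
      by (simp add: sum_distrib_left sum_distrib_right mult.assoc) (rule sum.swap)
    finally show "gf2_comb col X c r = gf2_comb basis V (gf2_comb coord X c) r" unfolding gf2_comb_def .
  qed
  have eqz: "gf2_comb col X c = (\<lambda>_. 0) \<longleftrightarrow> gf2_comb coord X c = (\<lambda>_. 0)" for c
  proof
    assume "gf2_comb col X c = (\<lambda>_. 0)"
    then have "gf2_comb basis V (gf2_comb coord X c) = (\<lambda>_. 0)" using key by simp
    then have inV: "\<forall>i\<in>V. gf2_comb coord X c i = 0" using basis unfolding gf2_indep_iff_comb by blast
    show "gf2_comb coord X c = (\<lambda>_. 0)"
    proof
      fix i show "gf2_comb coord X c i = 0"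
      proof (cases "i \<in> V")
        case True then show ?thesis using inV by blast
      next
        case False then show ?thesis unfolding gf2_comb_def using sp by simp
      qed
    qed
  next
    assume "gf2_comb coord X c = (\<lambda>_. 0)"
    then have "gf2_comb col X c = gf2_comb basis V (\<lambda>_. 0)" using key[of c] by simp
    also have "\<dots> = (\<lambda>_. 0)" unfolding gf2_comb_def by simp
    finally show "gf2_comb col X c = (\<lambda>_. 0)" .
  qed
  show ?thesis unfolding gf2_indep_iff_comb using eqz by simp
qed

section \<open>Partitions and subtransversals\<close>

lemma partition_class_unique:
  "is_partition U \<Omega> \<Longrightarrow> \<omega> \<in> \<Omega> \<Longrightarrow> \<omega>' \<in> \<Omega> \<Longrightarrow> x \<in> \<omega> \<Longrightarrow> x \<in> \<omega>' \<Longrightarrow> \<omega> = \<omega>'"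
  unfolding is_partition_def by blast

lemma partition_class_subset: "is_partition U \<Omega> \<Longrightarrow> \<omega> \<in> \<Omega> \<Longrightarrow> \<omega> \<subseteq> U"
  unfolding is_partition_def by blast

lemma partition_class_exists: "is_partition U \<Omega> \<Longrightarrow> x \<in> U \<Longrightarrow> \<exists>\<omega>\<in>\<Omega>. x \<in> \<omega>"
  unfolding is_partition_def by blast

lemma partition_finite: "is_partition U \<Omega> \<Longrightarrow> finite U \<Longrightarrow> finite \<Omega>"
  unfolding is_partition_def by (metis finite_UnionD)

lemma subtransversal_ground: "S \<in> subtransversals U \<Omega> \<Longrightarrow> S \<subseteq> U"
  unfolding subtransversals_def by blast

lemma subtransversal_subset:
  assumes "finite U" "S \<in> subtransversals U \<Omega>" "T \<subseteq> S"
  shows "T \<in> subtransversals U \<Omega>"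
proof -
  have fS: "finite S" using assms subtransversal_ground finite_subset by metis
  have "\<forall>\<omega>\<in>\<Omega>. card (T \<inter> \<omega>) \<le> card (S \<inter> \<omega>)"
    using fS assms(3) by (intro ballI card_mono) auto
  then show ?thesis using assms(2,3) unfolding subtransversals_def by force
qed

lemma subtransversal_class_unique:
  assumes "finite U" "S \<in> subtransversals U \<Omega>" "\<omega> \<in> \<Omega>" "x \<in> S \<inter> \<omega>" "y \<in> S \<inter> \<omega>"
  shows "x = y"
proof -
  have "card (S \<inter> \<omega>) \<le> 1" using assms(2,3) unfolding subtransversals_def by blast
  moreover have "finite (S \<inter> \<omega>)" using assms(1,2) subtransversal_ground finite_subset by (metis inf.coboundedI1)
  ultimately have "\<forall>a\<in>S \<inter> \<omega>. \<forall>b\<in>S \<inter> \<omega>. a = b" using card_le_Suc0_iff_eq[of "S \<inter> \<omega>"] by simp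
  then show ?thesis using assms(4,5) by blast
qed

lemma subtransversal_insert:
  assumes "finite U" "is_partition U \<Omega>" "S \<in> subtransversals U \<Omega>" "\<omega> \<in> \<Omega>" "x \<in> \<omega>" "S \<inter> \<omega> = {}"
  shows "insert x S \<in> subtransversals U \<Omega>"
  unfolding subtransversals_def
proof (intro CollectI conjI ballI)
  show "insert x S \<subseteq> U" using assms partition_class_subset subtransversal_ground by blast
  fix \<omega>' assume w: "\<omega>' \<in> \<Omega>"
  show "card (insert x S \<inter> \<omega>') \<le> 1"
  proof (cases "\<omega>' = \<omega>")
    case True
    then have "insert x S \<inter> \<omega>' = {x}" using assms by blast
    then show ?thesis by simp
  next
    case False
    then have "x \<notin> \<omega>'" using partition_class_unique[OF assms(2) assms(4) w assms(5)] by blast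
    then have "insert x S \<inter> \<omega>' = S \<inter> \<omega>'" by blast
    then show ?thesis using assms(3) w unfolding subtransversals_def by simp
  qed
qed

lemma card_subtransversal:
  assumes "finite U" "is_partition U \<Omega>" "S \<in> subtransversals U \<Omega>"
  shows "card S = card {\<omega>\<in>\<Omega>. S \<inter> \<omega> \<noteq> {}}"
proof -
  let ?F = "{\<omega>\<in>\<Omega>. S \<inter> \<omega> \<noteq> {}}"
  have fO: "finite \<Omega>" using partition_finite assms by blast
  have SU: "S \<subseteq> U" using assms subtransversal_ground by blast
  have "S = (\<Union>\<omega>\<in>?F. S \<inter> \<omega>)" using SU assms(2) unfolding is_partition_def by blast
  moreover have "card (\<Union>\<omega>\<in>?F. S \<inter> \<omega>) = (\<Sum>\<omega>\<in>?F. card (S \<inter> \<omega>))"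
  proof (rule card_UN_disjoint)
    show "finite ?F" using fO by simp
    show "\<forall>\<omega>\<in>?F. finite (S \<inter> \<omega>)" using assms(1) SU finite_subset by (metis inf.coboundedI1)
    show "\<forall>\<omega>\<in>?F. \<forall>\<omega>'\<in>?F. \<omega> \<noteq> \<omega>' \<longrightarrow> S \<inter> \<omega> \<inter> (S \<inter> \<omega>') = {}"
      using assms(2) unfolding is_partition_def by blast
  qed
  moreover have "\<forall>\<omega>\<in>?F. card (S \<inter> \<omega>) = 1"
  proof
    fix \<omega> assume w: "\<omega> \<in> ?F"
    have "card (S \<inter> \<omega>) \<le> 1" using assms(3) w unfolding subtransversals_def by blast
    moreover have "finite (S \<inter> \<omega>)" using assms(1) SU finite_subset by (metis inf.coboundedI1)
    moreover have "card (S \<inter> \<omega>) \<noteq> 0" using w \<open>finite (S \<inter> \<omega>)\<close> by simp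
    ultimately show "card (S \<inter> \<omega>) = 1" by linarith
  qed
  ultimately show ?thesis by simp
qed

lemma subtransversal_meets_other_classes:
  assumes fU: "finite U" and part: "is_partition U \<Omega>" and Ss: "S \<in> subtransversals U \<Omega>"
    and c: "card S = card \<Omega> - 1" and w: "\<omega> \<in> \<Omega>" and d: "\<omega> \<inter> S = {}"
  shows "\<forall>\<omega>'\<in>\<Omega> - {\<omega>}. S \<inter> \<omega>' \<noteq> {}"
proof -
  have fO: "finite \<Omega>" using partition_finite[OF part fU] .
  have sub: "{\<omega>'\<in>\<Omega>. S \<inter> \<omega>' \<noteq> {}} \<subseteq> \<Omega> - {\<omega>}" using d by blast
  have "card {\<omega>'\<in>\<Omega>. S \<inter> \<omega>' \<noteq> {}} = card (\<Omega> - {\<omega>})"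
    using card_subtransversal[OF fU part Ss] c w fO by simp
  then have "{\<omega>'\<in>\<Omega>. S \<inter> \<omega>' \<noteq> {}} = \<Omega> - {\<omega>}" using card_subset_eq[OF _ sub] fO by blast
  then show ?thesis by blast
qed

section \<open>Tight families\<close>

text \<open>The axioms of a tight multimatroid used below, stated for a family of subtransversals
  alone.\<close>

definition skew_extensible :: "'a set set \<Rightarrow> 'a set set \<Rightarrow> bool" where
  "skew_extensible \<Omega> \<I> \<longleftrightarrow> (\<forall>I\<in>\<I>. \<forall>\<omega>\<in>\<Omega>. \<forall>x\<in>\<omega>. \<forall>y\<in>\<omega>. x \<noteq> y \<and> \<omega> \<inter> I = {} \<longrightarrow>
         insert x I \<in> \<I> \<or> insert y I \<in> \<I>)"

definition tight_indep :: "'a set set \<Rightarrow> 'a set set \<Rightarrow> bool" where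
  "tight_indep \<Omega> \<I> \<longleftrightarrow> (\<forall>S\<in>\<I>. card S = card \<Omega> - 1 \<longrightarrow>
     (\<forall>\<omega>\<in>\<Omega>. \<omega> \<inter> S = {} \<longrightarrow> (\<exists>x\<in>\<omega>. insert x S \<notin> \<I>)))"

definition tight_family :: "'a set \<Rightarrow> 'a set set \<Rightarrow> 'a set set \<Rightarrow> bool" where
  "tight_family U \<Omega> \<I> \<longleftrightarrow> \<I> \<subseteq> subtransversals U \<Omega> \<and> (\<forall>X\<in>\<I>. \<forall>Y. Y \<subseteq> X \<longrightarrow> Y \<in> \<I>) \<and>
     skew_extensible \<Omega> \<I> \<and> tight_indep \<Omega> \<I>"

lemma extend_to_classes:
  assumes part: "is_partition U \<Omega>" and ax: "skew_extensible \<Omega> \<I>"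
    and fF: "finite F" and FO: "F \<subseteq> \<Omega>" and J: "J \<in> \<I>" and disj: "\<forall>\<omega>\<in>F. \<omega> \<inter> J = {}"
    and two: "\<forall>\<omega>\<in>F. \<exists>e1 e2. e1 \<in> \<omega> \<inter> E \<and> e2 \<in> \<omega> \<inter> E \<and> e1 \<noteq> e2"
  shows "\<exists>S\<in>\<I>. J \<subseteq> S \<and> S - J \<subseteq> E \<inter> \<Union>F \<and> (\<forall>\<omega>\<in>F. S \<inter> \<omega> \<noteq> {})"
  using fF FO disj two
proof (induction F rule: finite_induct)
  case empty
  then show ?case using J by blast
next
  case (insert \<omega> F)
  have p1: "F \<subseteq> \<Omega>" "\<forall>\<omega>\<in>F. \<omega> \<inter> J = {}" "\<forall>\<omega>\<in>F. \<exists>e1 e2. e1 \<in> \<omega> \<inter> E \<and> e2 \<in> \<omega> \<inter> E \<and> e1 \<noteq> e2"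
    using insert.prems by auto
  obtain S where S: "S \<in> \<I>" "J \<subseteq> S" "S - J \<subseteq> E \<inter> \<Union>F" "\<forall>\<omega>\<in>F. S \<inter> \<omega> \<noteq> {}"
    using insert.IH[OF p1] by blast
  have wO: "\<omega> \<in> \<Omega>" using insert.prems by blast
  have wJ: "\<omega> \<inter> J = {}" using insert.prems by blast
  have wF: "\<omega> \<inter> \<Union>F = {}"
  proof (rule ccontr)
    assume "\<omega> \<inter> \<Union>F \<noteq> {}"
    then obtain x \<omega>' where x: "x \<in> \<omega>" "\<omega>' \<in> F" "x \<in> \<omega>'" by blast
    then have "\<omega> = \<omega>'" using partition_class_unique[OF part wO, of \<omega>' x] p1(1) by blast
    then show False using x(2) insert.hyps(2) by simp
  qed
  have wS: "\<omega> \<inter> S = {}"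
  proof -
    have "S \<subseteq> J \<union> \<Union>F" using S(3) by blast
    then show ?thesis using wJ wF by blast
  qed
  obtain e1 e2 where e: "e1 \<in> \<omega> \<inter> E" "e2 \<in> \<omega> \<inter> E" "e1 \<noteq> e2" using insert.prems(3) by blast
  have "insert e1 S \<in> \<I> \<or> insert e2 S \<in> \<I>"
    using ax S(1) wO wS e unfolding skew_extensible_def by blast
  then obtain e where ee: "e \<in> \<omega> \<inter> E" "insert e S \<in> \<I>" using e by blast
  have "J \<subseteq> insert e S" using S(2) by blast
  moreover have "insert e S - J \<subseteq> E \<inter> \<Union>(insert \<omega> F)" using S(3) ee(1) by blast
  moreover have "\<forall>\<omega>'\<in>insert \<omega> F. insert e S \<inter> \<omega>' \<noteq> {}" using S(4) ee(1) by blast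
  ultimately show ?case using ee(2) by blast
qed

lemma two_outside_transversal:
  assumes "finite \<omega>" "3 \<le> card \<omega>" "card (B \<inter> \<omega>) = 1"
  shows "\<exists>e1 e2. e1 \<in> \<omega> - B \<and> e2 \<in> \<omega> - B \<and> e1 \<noteq> e2"
proof -
  have "card (\<omega> - B) = card \<omega> - card (B \<inter> \<omega>)"
    using assms(1) by (simp add: card_Diff_subset_Int Int_commute)
  then have "\<not> card (\<omega> - B) \<le> 1" using assms(2,3) by simp
  then show ?thesis using assms(1) by (auto simp: card_le_Suc0_iff_eq)
qed

lemma extend_to_near_transversal:
  assumes part: "is_partition U \<Omega>" and fU: "finite U" and sub: "\<I> \<subseteq> subtransversals U \<Omega>"
    and skew: "skew_extensible \<Omega> \<I>" and X: "X \<in> \<I>" "b \<in> X" and w: "\<omega> \<in> \<Omega>" "b \<in> \<omega>"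
    and two: "\<forall>\<omega>'\<in>\<Omega>. \<exists>e1 e2. e1 \<in> \<omega>' \<inter> E \<and> e2 \<in> \<omega>' \<inter> E \<and> e1 \<noteq> e2"
  shows "\<exists>S. insert b S \<in> \<I> \<and> X - {b} \<subseteq> S \<and> S - X \<subseteq> E \<and> S \<inter> \<omega> = {} \<and> card S = card \<Omega> - 1"
proof -
  define F where "F = {\<omega>'\<in>\<Omega>. \<omega>' \<inter> X = {}}"
  have fO: "finite \<Omega>" using partition_finite[OF part fU] .
  have F: "finite F" "F \<subseteq> \<Omega>" "\<forall>\<omega>'\<in>F. \<omega>' \<inter> X = {}" using fO unfolding F_def by auto
  obtain S' where S': "S' \<in> \<I>" "X \<subseteq> S'" "S' - X \<subseteq> E \<inter> \<Union>F" "\<forall>\<omega>'\<in>F. S' \<inter> \<omega>' \<noteq> {}"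
    using extend_to_classes[OF part skew F(1,2) X(1) F(3)] two F(2) by (meson subsetD)
  have S's: "S' \<in> subtransversals U \<Omega>" using S'(1) sub by blast
  define S where "S = S' - {b}"
  have bS': "insert b S = S'" using S'(2) X(2) unfolding S_def by blast
  have Sw: "S \<inter> \<omega> = {}"
    using subtransversal_class_unique[OF fU S's w(1)] X(2) w(2) S'(2) unfolding S_def by blast
  have "{\<omega>'\<in>\<Omega>. S \<inter> \<omega>' \<noteq> {}} = \<Omega> - {\<omega>}"
  proof (intro equalityI subsetI)
    fix \<omega>' assume w': "\<omega>' \<in> \<Omega> - {\<omega>}"
    then have "b \<notin> \<omega>'" using partition_class_unique[OF part w(1), of \<omega>' b] w(2) by blast
    moreover have "S' \<inter> \<omega>' \<noteq> {}" using S'(2,4) w' unfolding F_def by blast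
    ultimately show "\<omega>' \<in> {\<omega>'\<in>\<Omega>. S \<inter> \<omega>' \<noteq> {}}" using w' unfolding S_def by blast
  qed (use Sw in blast)
  then have "card S = card \<Omega> - 1"
    using card_subtransversal[OF fU part subtransversal_subset[OF fU S's]] w(1) fO
    unfolding S_def by simp
  moreover have "X - {b} \<subseteq> S" "S - X \<subseteq> E" using S'(2,3) unfolding S_def by auto
  ultimately show ?thesis using bS' S'(1) Sw by blast
qed

text \<open>The induction runs on the number of elements of B: a set containing b \<in> B is compared
  with a near-transversal through b, and the skew pair formed by b and the element that tightness
  provides in the class of b is used to transfer membership.\<close>

lemma tight_families_agree_step:
  assumes part: "is_partition U \<Omega>" and fU: "finite U" and big: "\<forall>\<omega>\<in>\<Omega>. 3 \<le> card \<omega>"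
    and B: "B \<in> transversals U \<Omega>"
    and ta: "tight_family U \<Omega> Ia" and tb: "tight_family U \<Omega> Ib"
    and smaller: "\<forall>Z\<in>subtransversals U \<Omega>. card (Z \<inter> B) < card (X \<inter> B) \<longrightarrow> (Z \<in> Ia \<longleftrightarrow> Z \<in> Ib)"
    and base: "\<forall>Z\<in>subtransversals U \<Omega>. Z \<inter> B = {} \<longrightarrow> (Z \<in> Ia \<longleftrightarrow> Z \<in> Ib)"
    and X: "X \<in> Ia"
  shows "X \<in> Ib"
proof (rule ccontr)
  assume nX: "X \<notin> Ib"
  have subA: "Ia \<subseteq> subtransversals U \<Omega>" and herA: "\<forall>X\<in>Ia. \<forall>Y. Y \<subseteq> X \<longrightarrow> Y \<in> Ia"
    and skewA: "skew_extensible \<Omega> Ia" and tightA: "tight_indep \<Omega> Ia"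
    and herB: "\<forall>X\<in>Ib. \<forall>Y. Y \<subseteq> X \<longrightarrow> Y \<in> Ib" and skewB: "skew_extensible \<Omega> Ib"
    using ta tb unfolding tight_family_def by auto
  have Xs: "X \<in> subtransversals U \<Omega>" using X subA by blast
  then have "X \<inter> B \<noteq> {}" using base X nX by blast
  then obtain b where b: "b \<in> X" "b \<in> B" by blast
  have "b \<in> U" using subtransversal_ground[OF Xs] b(1) by blast
  then obtain \<omega> where w: "\<omega> \<in> \<Omega>" "b \<in> \<omega>" using partition_class_exists[OF part] by blast
  have "card (B \<inter> \<omega>) = 1" using B w(1) unfolding transversals_def by blast
  then obtain z where "B \<inter> \<omega> = {z}" by (rule card_1_singletonE)
  then have Bw: "B \<inter> \<omega> = {b}" using b(2) w(2) by (metis IntI singletonD)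
  have "\<exists>e1 e2. e1 \<in> \<omega>' \<inter> (U - B) \<and> e2 \<in> \<omega>' \<inter> (U - B) \<and> e1 \<noteq> e2" if "\<omega>' \<in> \<Omega>" for \<omega>'
    using two_outside_transversal[of \<omega>' B] that big B partition_class_subset[OF part that]
      finite_subset[OF partition_class_subset[OF part that] fU]
    unfolding transversals_def by blast
  then obtain S where S: "insert b S \<in> Ia" "X - {b} \<subseteq> S" "S - X \<subseteq> U - B" "S \<inter> \<omega> = {}"
      "card S = card \<Omega> - 1"
    using extend_to_near_transversal[OF part fU subA skewA X b(1) w] by blast
  have SA: "S \<in> Ia" using herA S(1) by blast
  have Ss: "S \<in> subtransversals U \<Omega>" using SA subA by blast
  have fin: "finite (X \<inter> B)" using finite_subset[OF subtransversal_ground[OF Xs] fU] by simp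
  have "S \<inter> B \<subset> X \<inter> B"
  proof
    show "S \<inter> B \<subseteq> X \<inter> B" using S(3) by fast
    show "S \<inter> B \<noteq> X \<inter> B" using b S(4) w(2) by fast
  qed
  then have less: "card (S \<inter> B) < card (X \<inter> B)" by (rule psubset_card_mono[OF fin])
  obtain x where x: "x \<in> \<omega>" "insert x S \<notin> Ia"
    using tightA SA S(4,5) w(1) unfolding tight_indep_def by blast
  have xb: "x \<noteq> b" using x(2) S(1) by blast
  then have "x \<notin> B" using x(1) Bw by blast
  then have "card (insert x S \<inter> B) < card (X \<inter> B)" using less by simp
  then have "insert x S \<notin> Ib"
    using smaller x(2) subtransversal_insert[OF fU part Ss w(1) x(1) S(4)] by blast
  moreover have "insert b S \<notin> Ib" using herB nX S(2) by blast
  moreover have "S \<in> Ib" using smaller Ss less SA by blast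
  ultimately show False
    using skewB x(1) w xb S(4) unfolding skew_extensible_def by blast
qed

lemma tight_families_eq:
  assumes part: "is_partition U \<Omega>" and fU: "finite U" and big: "\<forall>\<omega>\<in>\<Omega>. 3 \<le> card \<omega>"
    and B: "B \<in> transversals U \<Omega>"
    and t1: "tight_family U \<Omega> I1" and t2: "tight_family U \<Omega> I2"
    and base: "\<forall>Z\<in>subtransversals U \<Omega>. Z \<inter> B = {} \<longrightarrow> (Z \<in> I1 \<longleftrightarrow> Z \<in> I2)"
  shows "I1 = I2"
proof -
  have "X \<in> I1 \<longleftrightarrow> X \<in> I2" if "X \<in> subtransversals U \<Omega>" for X
    using that
  proof (induction "card (X \<inter> B)" arbitrary: X rule: less_induct)
    case less
    have smaller: "\<forall>Z\<in>subtransversals U \<Omega>. card (Z \<inter> B) < card (X \<inter> B) \<longrightarrow> (Z \<in> I1 \<longleftrightarrow> Z \<in> I2)"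
      using less.hyps by blast
    then have smaller': "\<forall>Z\<in>subtransversals U \<Omega>. card (Z \<inter> B) < card (X \<inter> B) \<longrightarrow> (Z \<in> I2 \<longleftrightarrow> Z \<in> I1)"
      by blast
    have base': "\<forall>Z\<in>subtransversals U \<Omega>. Z \<inter> B = {} \<longrightarrow> (Z \<in> I2 \<longleftrightarrow> Z \<in> I1)" using base by blast
    show ?case
      using tight_families_agree_step[OF part fU big B t1 t2 smaller base]
        tight_families_agree_step[OF part fU big B t2 t1 smaller' base'] by blast
  qed
  moreover have "I1 \<subseteq> subtransversals U \<Omega>" "I2 \<subseteq> subtransversals U \<Omega>"
    using t1 t2 unfolding tight_family_def by simp_all
  ultimately show ?thesis by (metis subsetD subsetI subset_antisym)
qed

lemma finite_card_indep_subsets: "finite S \<Longrightarrow> finite {card I | I. I \<in> \<I> \<and> I \<subseteq> S}"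
  by (rule finite_subset[of _ "card ` Pow S"]) auto

lemma mm_rank_ge:
  assumes "finite S" "I \<in> \<I>" "I \<subseteq> S"
  shows "card I \<le> mm_rank \<I> S"
  unfolding mm_rank_def by (rule Max_ge) (use assms finite_card_indep_subsets in auto)

lemma mm_rank_le:
  assumes "finite S" "{} \<in> \<I>" "\<And>I. I \<in> \<I> \<Longrightarrow> I \<subseteq> S \<Longrightarrow> card I \<le> n"
  shows "mm_rank \<I> S \<le> n"
  unfolding mm_rank_def by (rule Max.boundedI) (use assms finite_card_indep_subsets in auto)

lemma mm_rank_attained:
  assumes "finite S" "{} \<in> \<I>"
  obtains B where "B \<in> \<I>" "B \<subseteq> S" "card B = mm_rank \<I> S"
proof -
  have "mm_rank \<I> S \<in> {card I | I. I \<in> \<I> \<and> I \<subseteq> S}"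
    unfolding mm_rank_def by (rule Max_in) (use assms finite_card_indep_subsets in auto)
  then obtain B where "B \<in> \<I>" "B \<subseteq> S" "mm_rank \<I> S = card B" by blast
  then show ?thesis using that by simp
qed

lemma tight_imp_tight_indep:
  assumes fU: "finite U" and sub: "\<I> \<subseteq> subtransversals U \<Omega>" and tight: "tight U \<Omega> \<I>"
    and her: "\<forall>X\<in>\<I>. \<forall>Y. Y \<subseteq> X \<longrightarrow> Y \<in> \<I>"
  shows "tight_indep \<Omega> \<I>"
  unfolding tight_indep_def
proof (intro ballI impI allI)
  fix S \<omega> assume S: "S \<in> \<I>" and c: "card S = card \<Omega> - 1" and w: "\<omega> \<in> \<Omega>" and d: "\<omega> \<inter> S = {}"
  have Ss: "S \<in> subtransversals U \<Omega>" using S sub by blast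
  have fS: "finite S" using finite_subset[OF subtransversal_ground[OF Ss] fU] .
  obtain x where x: "x \<in> \<omega>" "mm_rank \<I> (insert x S) = mm_rank \<I> S"
    using tight Ss c w d unfolding tight_def by meson
  have "mm_rank \<I> S \<le> card S"
    using mm_rank_le[OF fS, of \<I>] S her card_mono[OF fS] by blast
  moreover have "card (insert x S) = card S + 1" using fS x(1) d by (subst card_insert_disjoint) auto
  ultimately have "insert x S \<notin> \<I>" using mm_rank_ge[of "insert x S" "insert x S" \<I>] fS x(2) by force
  then show "\<exists>x\<in>\<omega>. insert x S \<notin> \<I>" using x(1) by blast
qed

text \<open>In a binary multimatroid, a maximum independent subset of S spans S, so adding an element
  spanned by S does not increase the rank.\<close>

lemma mm_rank_insert_span:
  assumes fU: "finite U" and xS: "insert x S \<in> subtransversals U \<Omega>"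
    and sp: "col x \<in> gf2_span col S"
    and II: "\<I> = sheltered_indep U (column_matroid U col) \<Omega>"
  shows "mm_rank \<I> (insert x S) = mm_rank \<I> S"
proof -
  have memb: "J \<in> \<I> \<longleftrightarrow> gf2_indep col J" if "J \<subseteq> insert x S" for J
    using subtransversal_subset[OF fU xS that] subtransversal_ground
    unfolding II sheltered_indep_def column_matroid_def by blast
  have fxS: "finite (insert x S)" using finite_subset[OF subtransversal_ground[OF xS] fU] .
  then have fS: "finite S" by simp
  have ne: "{} \<in> \<I>" using memb by simp
  obtain B where B: "B \<in> \<I>" "B \<subseteq> S" "card B = mm_rank \<I> S" using mm_rank_attained[OF fS ne] .
  have fB: "finite B" using B(2) fS finite_subset by blast
  have Bi: "gf2_indep col B" using memb B by blast
  have spans: "col s \<in> gf2_span col B" if s: "s \<in> S" for s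
  proof (rule ccontr)
    assume nsp: "col s \<notin> gf2_span col B"
    then have "s \<notin> B" using gf2_span_self[OF fB] by blast
    then have "insert s B \<in> \<I>" using memb s B(2) gf2_indep_insert[OF fB _ Bi] nsp by blast
    then have "card (insert s B) \<le> mm_rank \<I> S" using mm_rank_ge[OF fS] s B(2) by blast
    then show False using B(3) fB \<open>s \<notin> B\<close> by simp
  qed
  then have "col x \<in> gf2_span col B" using gf2_span_trans[of S col B] spans sp by blast
  then have "mm_rank \<I> (insert x S) \<le> card B"
    using mm_rank_le[OF fxS ne] gf2_indep_card_le_span[OF fB] memb spans
    by (metis finite_subset fxS insert_iff subsetD)
  moreover have "card B \<le> mm_rank \<I> (insert x S)" using mm_rank_ge[OF fxS B(1)] B(2) by blast
  ultimately show ?thesis using B(3) by simp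
qed

section \<open>The matrix (I | A | A + I)\<close>

text \<open>Column k of the matrix (I | A | A + I) at vertex v is coeff_I k \<cdot> e_v + coeff_A k \<cdot> A_v.\<close>

definition coeff_I :: "nat \<Rightarrow> bit" where "coeff_I k = (if k = 2 then 0 else 1)"
definition coeff_A :: "nat \<Rightarrow> bit" where "coeff_A k = (if k = 1 then 0 else 1)"

definition IAAI_column :: "('v \<Rightarrow> 'v \<Rightarrow> bit) \<Rightarrow> 'v set \<Rightarrow> nat \<Rightarrow> 'v \<Rightarrow> 'v \<Rightarrow> bit" where
  "IAAI_column A V k v = (\<lambda>w. if w \<in> V then IAAI_col A k v w else 0)"

definition mat_vec :: "('v \<Rightarrow> 'v \<Rightarrow> bit) \<Rightarrow> 'v set \<Rightarrow> ('v \<Rightarrow> bit) \<Rightarrow> 'v \<Rightarrow> bit" where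
  "mat_vec A V y i = (\<Sum>w\<in>V. A i w * y w)"

definition symmetric_on :: "'v set \<Rightarrow> ('v \<Rightarrow> 'v \<Rightarrow> bit) \<Rightarrow> bool" where
  "symmetric_on V A \<longleftrightarrow> (\<forall>v\<in>V. \<forall>w\<in>V. A v w = A w v)"

lemma IAAI_col_coeffs: "IAAI_col A k v w = coeff_I k * (if w = v then 1 else 0) + coeff_A k * A w v"
  unfolding IAAI_col_def coeff_I_def coeff_A_def by (auto simp: add.commute)

lemma IAAI_column_outside: "i \<notin> V \<Longrightarrow> IAAI_column A V k v i = 0"
  unfolding IAAI_column_def by simp

lemma IAAI_column_3: "IAAI_column A V 3 v = (\<lambda>i. IAAI_column A V 1 v i + IAAI_column A V 2 v i)"
  unfolding IAAI_column_def IAAI_col_def by (auto simp: fun_eq_iff add.commute)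

lemma IAAI_coeff_cross_zero:
  assumes "coeff_I k * p1 + coeff_A k * q1 = 0" "coeff_I k * p2 + coeff_A k * q2 = 0"
  shows "p1 * q2 + p2 * (q1::bit) = 0"
  using assms unfolding coeff_I_def coeff_A_def
  by (cases p1; cases p2; cases q1; cases q2; cases "k = 1"; cases "k = 2") simp_all

lemma mat_vec_add: "mat_vec A V (\<lambda>w. f w + g w) i = mat_vec A V f i + mat_vec A V g i"
  unfolding mat_vec_def by (simp add: distrib_left sum.distrib)

lemma mat_vec_unit: "finite V \<Longrightarrow> v \<in> V \<Longrightarrow> mat_vec A V (\<lambda>w. if w = v then 1 else 0) i = A i v"
  unfolding mat_vec_def by (rule sum_mult_indicator)

definition sym_pairing :: "('v \<Rightarrow> 'v \<Rightarrow> bit) \<Rightarrow> 'v set \<Rightarrow> ('v \<Rightarrow> bit) \<Rightarrow> ('v \<Rightarrow> bit) \<Rightarrow> bit" where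
  "sym_pairing A V x y = (\<Sum>i\<in>V. x i * mat_vec A V y i + y i * mat_vec A V x i)"

text \<open>Over GF(2), x^T A y + y^T A x vanishes for symmetric A. The two lemmas on the
  columns of (I | A | A + I) below are proved by exhibiting x, y for which this pairing is 1.\<close>

lemma sym_pairing_zero:
  assumes "symmetric_on V A"
  shows "sym_pairing A V x y = 0"
proof -
  have "(\<Sum>i\<in>V. y i * mat_vec A V x i) = (\<Sum>i\<in>V. \<Sum>w\<in>V. y i * A i w * x w)"
    unfolding mat_vec_def by (simp add: sum_distrib_left mult.assoc)
  also have "\<dots> = (\<Sum>w\<in>V. \<Sum>i\<in>V. y i * A i w * x w)" by (rule sum.swap)
  also have "\<dots> = (\<Sum>w\<in>V. \<Sum>i\<in>V. x w * (A w i * y i))"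
    using assms unfolding symmetric_on_def
    by (intro sum.cong refl) (simp add: mult.commute mult.left_commute)
  also have "\<dots> = (\<Sum>i\<in>V. x i * mat_vec A V y i)"
    unfolding mat_vec_def by (simp add: sum_distrib_left)
  finally show ?thesis unfolding sym_pairing_def by (simp add: sum.distrib)
qed

lemma gf2_dot_IAAI_column:
  assumes "finite V" "symmetric_on V A" "w \<in> V"
  shows "gf2_dot V y (IAAI_column A V k w) = coeff_I k * y w + coeff_A k * mat_vec A V y w"
proof -
  have "gf2_dot V y (IAAI_column A V k w) =
      (\<Sum>i\<in>V. y i * (coeff_I k * (if i = w then 1 else 0) + coeff_A k * A i w))"
    unfolding gf2_dot_def IAAI_column_def IAAI_col_coeffs by (intro sum.cong) auto
  also have "\<dots> = (\<Sum>i\<in>V. coeff_I k * (y i * (if i = w then 1 else 0))) + (\<Sum>i\<in>V. coeff_A k * (A w i * y i))"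
    using assms(2,3) unfolding symmetric_on_def
    by (simp add: distrib_left sum.distrib, intro arg_cong2[where f="(+)"] sum.cong refl) (auto simp: ac_simps)
  also have "\<dots> = coeff_I k * y w + coeff_A k * mat_vec A V y w"
    unfolding mat_vec_def by (simp add: sum_distrib_left[symmetric] sum_mult_indicator[OF assms(1,3)])
  finally show ?thesis .
qed

lemma gf2_comb_IAAI_columns:
  fixes tp :: "'v \<Rightarrow> nat"
  assumes "finite V" "P \<subseteq> V" "i \<in> V"
  shows "gf2_comb (\<lambda>w. IAAI_column A V (tp w) w) P c i =
     (if i \<in> P then coeff_I (tp i) * c i else 0) + mat_vec A V (\<lambda>w. if w \<in> P then coeff_A (tp w) * c w else 0) i"
proof -
  have fP: "finite P" using assms finite_subset by blast
  have "gf2_comb (\<lambda>w. IAAI_column A V (tp w) w) P c i =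
     (\<Sum>w\<in>P. (if w = i then coeff_I (tp i) * c i else 0)) + (\<Sum>w\<in>P. A i w * (coeff_A (tp w) * c w))"
    unfolding gf2_comb_def IAAI_column_def IAAI_col_coeffs using assms(3)
    by (simp add: distrib_left sum.distrib, intro arg_cong2[where f="(+)"] sum.cong refl) (auto simp: ac_simps)
  also have "(\<Sum>w\<in>P. (if w = i then coeff_I (tp i) * c i else 0)) = (if i \<in> P then coeff_I (tp i) * c i else 0)"
    using fP by (simp add: sum.delta)
  also have "(\<Sum>w\<in>P. A i w * (coeff_A (tp w) * c w)) = mat_vec A V (\<lambda>w. if w \<in> P then coeff_A (tp w) * c w else 0) i"
    unfolding mat_vec_def using assms(1,2)
    by (simp add: if_distrib[of "(*) _"] sum.inter_restrict[symmetric] Int_absorb1 cong: if_cong)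
  finally show ?thesis .
qed

lemma IAAI_some_column_in_span:
  fixes tp :: "'v \<Rightarrow> nat"
  assumes fin: "finite V" and sym: "symmetric_on V A" and v: "v \<in> V"
  defines "g \<equiv> (\<lambda>w. IAAI_column A V (tp w) w)"
  shows "\<exists>k\<in>{1,2,3}. IAAI_column A V k v \<in> gf2_span g (V - {v})"
proof (rule ccontr)
  let ?P = "V - {v}" and ?e = "IAAI_column A V 1 v" and ?a = "IAAI_column A V 2 v"
  assume "\<not> ?thesis"
  then have n1: "?e \<notin> gf2_span g ?P" and n2: "?a \<notin> gf2_span g ?P"
    and n3: "(\<lambda>i. ?e i + ?a i) \<notin> gf2_span g ?P"
    using IAAI_column_3[of A V v] by auto
  have n3': "(\<lambda>i. ?a i + ?e i) \<notin> gf2_span g ?P" using n3 by (simp add: add.commute)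
  have fP: "finite ?P" "v \<notin> ?P" using fin by simp_all
  \<comment> \<open>e_v and A_v are independent modulo the span; separate each from the other.\<close>
  define g1 where "g1 = g(v := ?a)"
  define g2 where "g2 = g(v := ?e)"
  have span_eq: "gf2_span g1 ?P = gf2_span g ?P" "gf2_span g2 ?P = gf2_span g ?P"
    unfolding g1_def g2_def by (rule gf2_span_cong, simp)+
  have e1: "?e \<notin> gf2_span g1 (insert v ?P)"
    using gf2_span_insert[OF fP, of ?e g1] span_eq n1 n3 by (simp add: g1_def)
  have e2: "?a \<notin> gf2_span g2 (insert v ?P)"
    using gf2_span_insert[OF fP, of ?a g2] span_eq n2 n3' by (simp add: g2_def)
  have s1: "\<forall>x\<in>insert v ?P. \<forall>i. i \<notin> V \<longrightarrow> g1 x i = 0"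
    and s2: "\<forall>x\<in>insert v ?P. \<forall>i. i \<notin> V \<longrightarrow> g2 x i = 0"
    by (simp_all add: g1_def g2_def g_def IAAI_column_outside)
  obtain y1 where y1: "\<forall>x\<in>insert v ?P. gf2_dot V y1 (g1 x) = 0" "gf2_dot V y1 ?e = 1"
    using gf2_separating_vector[OF fin _ s1 _ e1] fP by (auto simp: IAAI_column_outside)
  obtain y2 where y2: "\<forall>x\<in>insert v ?P. gf2_dot V y2 (g2 x) = 0" "gf2_dot V y2 ?a = 1"
    using gf2_separating_vector[OF fin _ s2 _ e2] fP by (auto simp: IAAI_column_outside)
  have at_v: "y1 v = 1" "mat_vec A V y1 v = 0" "y2 v = 0" "mat_vec A V y2 v = 1"
    using y1 y2 gf2_dot_IAAI_column[OF fin sym v, of y1] gf2_dot_IAAI_column[OF fin sym v, of y2]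
    by (auto simp: g1_def g2_def coeff_I_def coeff_A_def)
  have "sym_pairing A V y1 y2 = y1 v * mat_vec A V y2 v + y2 v * mat_vec A V y1 v"
    unfolding sym_pairing_def
  proof (rule sum_eq_single_nonzero[OF fin v])
    fix i assume i: "i \<in> V - {v}"
    have "gf2_dot V y1 (g i) = 0" "gf2_dot V y2 (g i) = 0" using y1 y2 i by (auto simp: g1_def g2_def)
    then have "coeff_I (tp i) * y1 i + coeff_A (tp i) * mat_vec A V y1 i = 0"
      "coeff_I (tp i) * y2 i + coeff_A (tp i) * mat_vec A V y2 i = 0"
      using gf2_dot_IAAI_column[OF fin sym, of i] i by (auto simp: g_def)
    then show "y1 i * mat_vec A V y2 i + y2 i * mat_vec A V y1 i = 0" by (rule IAAI_coeff_cross_zero)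
  qed
  then show False using at_v sym_pairing_zero[OF sym, of y1 y2] by simp
qed

lemma IAAI_not_both_columns_in_span:
  fixes tp :: "'v \<Rightarrow> nat"
  assumes fin: "finite V" and sym: "symmetric_on V A" and v: "v \<in> V" and P: "P \<subseteq> V - {v}"
  defines "g \<equiv> (\<lambda>w. IAAI_column A V (tp w) w)"
  shows "\<not> (IAAI_column A V 1 v \<in> gf2_span g P \<and> IAAI_column A V 2 v \<in> gf2_span g P)"
proof
  assume "IAAI_column A V 1 v \<in> gf2_span g P \<and> IAAI_column A V 2 v \<in> gf2_span g P"
  then obtain c d where c: "IAAI_column A V 1 v = gf2_comb g P c" and d: "IAAI_column A V 2 v = gf2_comb g P d"
    unfolding gf2_span_def by blast
  have PV: "P \<subseteq> V" and vP: "v \<notin> P" using P by auto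
  define x where "x = (\<lambda>w. if w \<in> P then coeff_A (tp w) * c w else 0)"
  define x' where "x' = (\<lambda>w. if w \<in> P then coeff_A (tp w) * d w else 0)"
  define y where "y = (\<lambda>w. x' w + (if w = v then 1 else (0::bit)))"
  have Ax: "mat_vec A V x i = (if i = v then 1 else 0) + (if i \<in> P then coeff_I (tp i) * c i else 0)"
    if i: "i \<in> V" for i
  proof -
    have "IAAI_column A V 1 v i = (if i \<in> P then coeff_I (tp i) * c i else 0) + mat_vec A V x i"
      using c gf2_comb_IAAI_columns[OF fin PV i, where tp=tp and c=c and A=A] unfolding g_def x_def by simp
    moreover have "IAAI_column A V 1 v i = (if i = v then 1 else 0)"
      using i unfolding IAAI_column_def IAAI_col_def by simp
    ultimately have "(if i = v then 1 else 0) = (if i \<in> P then coeff_I (tp i) * c i else 0) + mat_vec A V x i"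
      by simp
    then show ?thesis by (rule bit_add_solve)
  qed
  have Ay: "mat_vec A V y i = (if i \<in> P then coeff_I (tp i) * d i else 0)" if i: "i \<in> V" for i
  proof -
    have "IAAI_column A V 2 v i = (if i \<in> P then coeff_I (tp i) * d i else 0) + mat_vec A V x' i"
      using d gf2_comb_IAAI_columns[OF fin PV i, where tp=tp and c=d and A=A] unfolding g_def x'_def by simp
    moreover have "IAAI_column A V 2 v i = A i v" using i unfolding IAAI_column_def IAAI_col_def by simp
    moreover have "mat_vec A V y i = mat_vec A V x' i + A i v"
      unfolding y_def mat_vec_add mat_vec_unit[OF fin v] ..
    ultimately have "A i v = (if i \<in> P then coeff_I (tp i) * d i else 0) + mat_vec A V x' i" by simp
    then show ?thesis unfolding \<open>mat_vec A V y i = mat_vec A V x' i + A i v\<close>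
      by (metis add.commute bit_add_solve)
  qed
  have "sym_pairing A V x y = x v * mat_vec A V y v + y v * mat_vec A V x v"
    unfolding sym_pairing_def
  proof (rule sum_eq_single_nonzero[OF fin v])
    fix i assume i: "i \<in> V - {v}"
    show "x i * mat_vec A V y i + y i * mat_vec A V x i = 0"
      using Ax[of i] Ay[of i] i by (cases "i \<in> P") (simp_all add: x_def y_def x'_def ac_simps)
  qed
  then show False using Ax[OF v] vP sym_pairing_zero[OF sym, of x y] by (simp add: x_def y_def x'_def)
qed

lemma gf2_span_unit_columns_iff:
  assumes "finite W" "W \<subseteq> V"
  shows "f \<in> gf2_span (IAAI_column A V 1) W \<longleftrightarrow> (\<forall>i. i \<notin> W \<longrightarrow> f i = 0)"
proof
  have unit: "c k * IAAI_column A V 1 k i = (if k = i then (if i \<in> V then c i else 0) else 0)" for c k i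
    unfolding IAAI_column_def IAAI_col_def by auto
  show "f \<in> gf2_span (IAAI_column A V 1) W \<Longrightarrow> \<forall>i. i \<notin> W \<longrightarrow> f i = 0"
    unfolding gf2_span_def gf2_comb_def unit using assms(1) by (auto simp: sum.delta')
  assume "\<forall>i. i \<notin> W \<longrightarrow> f i = 0"
  then have "f = gf2_comb (IAAI_column A V 1) W f"
    unfolding gf2_comb_def unit using assms by (auto simp: fun_eq_iff sum.delta')
  then show "f \<in> gf2_span (IAAI_column A V 1) W" unfolding gf2_span_def by blast
qed

section \<open>Multimatroids sheltered by (I | A | A + I)\<close>

lemma IAAI_two_columns_span_first_two:
  assumes "k \<in> {1,2,3}" "k' \<in> {1,2,3}" "k \<noteq> k'"
    "IAAI_column A V k v \<in> gf2_span col I" "IAAI_column A V k' v \<in> gf2_span col I"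
  shows "IAAI_column A V 1 v \<in> gf2_span col I \<and> IAAI_column A V 2 v \<in> gf2_span col I"
proof -
  let ?S = "gf2_span col I"
  have "(\<lambda>i. IAAI_column A V 2 v i + IAAI_column A V 3 v i) = IAAI_column A V 1 v"
    "(\<lambda>i. IAAI_column A V 1 v i + IAAI_column A V 3 v i) = IAAI_column A V 2 v"
    unfolding IAAI_column_3 by (simp_all add: fun_eq_iff add.assoc[symmetric])
  then have "IAAI_column A V 2 v \<in> ?S \<Longrightarrow> IAAI_column A V 3 v \<in> ?S \<Longrightarrow> IAAI_column A V 1 v \<in> ?S"
    "IAAI_column A V 1 v \<in> ?S \<Longrightarrow> IAAI_column A V 3 v \<in> ?S \<Longrightarrow> IAAI_column A V 2 v \<in> ?S"
    using gf2_span_add[of _ col I] by metis+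
  with assms show ?thesis by (elim insertE emptyE) simp_all
qed

locale IAAI_representation =
  fixes U :: "'a set" and \<Omega> :: "'a set set" and V :: "nat set" and A :: "nat \<Rightarrow> nat \<Rightarrow> bit"
    and u :: "nat \<Rightarrow> nat \<Rightarrow> 'a" and col :: "'a \<Rightarrow> nat \<Rightarrow> bit"
  assumes finite_V: "finite V" and symmetric: "symmetric_on V A"
    and inj_u: "inj_on (\<lambda>(k, v). u k v) ({1,2,3} \<times> V)"
    and ground: "U = (\<lambda>(k, v). u k v) ` ({1,2,3} \<times> V)"
    and classes: "\<Omega> = {{u 1 v, u 2 v, u 3 v} | v. v \<in> V}"
    and col_u: "\<forall>k\<in>{1,2,3}. \<forall>v\<in>V. col (u k v) = IAAI_column A V k v"
begin

definition vclass :: "nat \<Rightarrow> 'a set" where "vclass v = {u 1 v, u 2 v, u 3 v}"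

abbreviation indep :: "'a set set" where "indep \<equiv> sheltered_indep U (column_matroid U col) \<Omega>"

lemma u_eq_iff:
  "k \<in> {1,2,3} \<Longrightarrow> k' \<in> {1,2,3} \<Longrightarrow> v \<in> V \<Longrightarrow> v' \<in> V \<Longrightarrow> u k v = u k' v' \<longleftrightarrow> k = k' \<and> v = v'"
  using inj_onD[OF inj_u, of "(k,v)" "(k',v')"] by auto

lemma u_in_U: "k \<in> {1,2,3} \<Longrightarrow> v \<in> V \<Longrightarrow> u k v \<in> U"
  using ground by auto

lemma U_cases: "x \<in> U \<Longrightarrow> \<exists>k\<in>{1,2,3}. \<exists>v\<in>V. x = u k v"
  using ground by auto

lemma finite_U: "finite U"
  using ground finite_V by simp

lemma classes_eq: "\<Omega> = vclass ` V"
  unfolding classes vclass_def by blast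

lemma vclass_cases: "x \<in> vclass v \<Longrightarrow> \<exists>k\<in>{1,2,3}. x = u k v"
  unfolding vclass_def by auto

lemma card_vclass: "v \<in> V \<Longrightarrow> card (vclass v) = 3"
  unfolding vclass_def using u_eq_iff[of _ _ v v] by (simp add: card_insert_if)

lemma vclass_disjoint: "v \<in> V \<Longrightarrow> w \<in> V \<Longrightarrow> x \<in> vclass v \<Longrightarrow> x \<in> vclass w \<Longrightarrow> v = w"
  using vclass_cases u_eq_iff by metis

lemma vclass_inj: "v \<in> V \<Longrightarrow> w \<in> V \<Longrightarrow> vclass v = vclass w \<Longrightarrow> v = w"
  by (metis insertI1 vclass_def vclass_disjoint)

lemma partition: "is_partition U \<Omega>"
  unfolding is_partition_def classes_eq
proof (intro conjI ballI impI)
  show "\<Union>(vclass ` V) = U"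
    using U_cases u_in_U unfolding vclass_def by fastforce
qed (auto simp: vclass_def dest: vclass_disjoint)

lemma card_classes: "card \<Omega> = card V"
proof -
  have "inj_on vclass V" by (rule inj_onI) (rule vclass_inj)
  then show ?thesis unfolding classes_eq by (simp add: card_image)
qed

lemma col_outside: "x \<in> U \<Longrightarrow> i \<notin> V \<Longrightarrow> col x i = 0"
  using U_cases col_u IAAI_column_outside by metis

lemma indep_iff: "X \<in> indep \<longleftrightarrow> X \<in> subtransversals U \<Omega> \<and> gf2_indep col X"
  unfolding sheltered_indep_def column_matroid_def using subtransversal_ground by blast

lemma subtransversal_repr:
  assumes S: "S \<in> subtransversals U \<Omega>"
  obtains P tp where "P = {w\<in>V. S \<inter> vclass w \<noteq> {}}" "\<forall>w\<in>P. tp w \<in> {1,2,3}"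
    "S = (\<lambda>w. u (tp w) w) ` P" "inj_on (\<lambda>w. u (tp w) w) P"
    "gf2_span col S = gf2_span (\<lambda>w. IAAI_column A V (tp w) w) P"
proof -
  define P where "P = {w\<in>V. S \<inter> vclass w \<noteq> {}}"
  define tp where "tp = (\<lambda>w. SOME k. k \<in> {1,2,3} \<and> u k w \<in> S)"
  have tp: "tp w \<in> {1,2,3} \<and> u (tp w) w \<in> S" if "w \<in> P" for w
  proof -
    have "\<exists>k. k \<in> {1,2,3} \<and> u k w \<in> S" using that vclass_cases unfolding P_def by blast
    then show ?thesis unfolding tp_def by (rule someI_ex)
  qed
  have "S \<subseteq> (\<lambda>w. u (tp w) w) ` P"
  proof
    fix s assume s: "s \<in> S"
    then obtain k v where kv: "k \<in> {1,2,3}" "v \<in> V" "s = u k v"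
      using subtransversal_ground[OF S] U_cases by blast
    then have vP: "v \<in> P" unfolding P_def vclass_def using s by auto
    have "vclass v \<in> \<Omega>" using kv(2) unfolding classes_eq by blast
    then have "s = u (tp v) v"
      using subtransversal_class_unique[OF finite_U S, of "vclass v" s "u (tp v) v"] s kv tp[OF vP]
      unfolding vclass_def by auto
    then show "s \<in> (\<lambda>w. u (tp w) w) ` P" using vP by blast
  qed
  then have S_eq: "S = (\<lambda>w. u (tp w) w) ` P" using tp by blast
  have inj: "inj_on (\<lambda>w. u (tp w) w) P"
    by (rule inj_onI) (use u_eq_iff tp in \<open>auto simp: P_def\<close>)
  have "\<forall>w\<in>P. col (u (tp w) w) = IAAI_column A V (tp w) w"
    using tp col_u unfolding P_def by blast
  then have span: "gf2_span col S = gf2_span (\<lambda>w. IAAI_column A V (tp w) w) P"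
    unfolding S_eq by (rule gf2_span_reindex[OF inj])
  show ?thesis by (rule that[OF P_def _ S_eq inj span]) (use tp in blast)
qed

lemma first_two_columns_not_in_span:
  assumes Y: "Y \<in> subtransversals U \<Omega>" and v: "v \<in> V" and disj: "Y \<inter> vclass v = {}"
  shows "\<not> (IAAI_column A V 1 v \<in> gf2_span col Y \<and> IAAI_column A V 2 v \<in> gf2_span col Y)"
proof -
  obtain P tp where P: "P = {w\<in>V. Y \<inter> vclass w \<noteq> {}}" and "\<forall>w\<in>P. tp w \<in> {1,2,3}"
    "Y = (\<lambda>w. u (tp w) w) ` P" "inj_on (\<lambda>w. u (tp w) w) P"
    and span: "gf2_span col Y = gf2_span (\<lambda>w. IAAI_column A V (tp w) w) P"
    by (rule subtransversal_repr[OF Y])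
  have "P \<subseteq> V - {v}" using P disj by blast
  then show ?thesis
    unfolding span by (rule IAAI_not_both_columns_in_span[OF finite_V symmetric v])
qed

lemma near_transversal_spans_some_column:
  assumes S: "S \<in> subtransversals U \<Omega>" and card: "card S = card \<Omega> - 1"
    and w: "\<omega> \<in> \<Omega>" and disj: "\<omega> \<inter> S = {}"
  shows "\<exists>x\<in>\<omega>. col x \<in> gf2_span col S"
proof -
  obtain v where v: "v \<in> V" "\<omega> = vclass v" using w unfolding classes_eq by blast
  obtain P tp where P: "P = {w\<in>V. S \<inter> vclass w \<noteq> {}}" and "\<forall>w\<in>P. tp w \<in> {1,2,3}"
    "S = (\<lambda>w. u (tp w) w) ` P" "inj_on (\<lambda>w. u (tp w) w) P"
    and span: "gf2_span col S = gf2_span (\<lambda>w. IAAI_column A V (tp w) w) P"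
    by (rule subtransversal_repr[OF S])
  have "\<forall>\<omega>'\<in>\<Omega> - {\<omega>}. S \<inter> \<omega>' \<noteq> {}"
    using subtransversal_meets_other_classes[OF finite_U partition S card w disj] .
  moreover have "vclass w \<in> \<Omega> - {\<omega>}" if w: "w \<in> V - {v}" for w
  proof -
    have "vclass w \<noteq> vclass v" using w v(1) vclass_inj by blast
    then show ?thesis using w v(2) unfolding classes_eq by blast
  qed
  moreover have "S \<inter> vclass v = {}" using disj v(2) by blast
  ultimately have "P = V - {v}" unfolding P by auto
  then obtain k where k: "k \<in> {1,2,3}" "IAAI_column A V k v \<in> gf2_span col S"
    using IAAI_some_column_in_span[OF finite_V symmetric v(1), of tp] span \<open>P = V - {v}\<close> by metis
  moreover have "col (u k v) = IAAI_column A V k v" using col_u k(1) v(1) by blast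
  ultimately have "col (u k v) \<in> gf2_span col S" by simp
  moreover have "u k v \<in> \<omega>" using k(1) v(2) unfolding vclass_def by auto
  ultimately show ?thesis by blast
qed

lemma indep_skew_extensible: "skew_extensible \<Omega> indep"
  unfolding skew_extensible_def
proof (intro ballI impI)
  fix I \<omega> x y assume I: "I \<in> indep" and w: "\<omega> \<in> \<Omega>" and x: "x \<in> \<omega>" and y: "y \<in> \<omega>"
    and xy: "x \<noteq> y \<and> \<omega> \<inter> I = {}"
  obtain v where v: "v \<in> V" "\<omega> = vclass v" using w unfolding classes_eq by blast
  have Is: "I \<in> subtransversals U \<Omega>" and Ii: "gf2_indep col I" using I indep_iff by auto
  have fI: "finite I" using finite_subset[OF subtransversal_ground[OF Is] finite_U] .
  show "insert x I \<in> indep \<or> insert y I \<in> indep"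
  proof (rule ccontr)
    assume "\<not> ?thesis"
    then have "\<not> gf2_indep col (insert x I)" "\<not> gf2_indep col (insert y I)"
      using subtransversal_insert[OF finite_U partition Is w] x y xy indep_iff by auto
    moreover have "x \<notin> I" "y \<notin> I" using x y xy by auto
    ultimately have "col x \<in> gf2_span col I" "col y \<in> gf2_span col I"
      using gf2_indep_insert[OF fI _ Ii] by auto
    moreover obtain k k' where k: "k \<in> {1,2,3}" "x = u k v" and k': "k' \<in> {1,2,3}" "y = u k' v"
      using vclass_cases x y v(2) by metis
    moreover have "col x = IAAI_column A V k v" "col y = IAAI_column A V k' v"
      using col_u k k' v(1) by blast+
    ultimately have "IAAI_column A V 1 v \<in> gf2_span col I \<and> IAAI_column A V 2 v \<in> gf2_span col I"
      using IAAI_two_columns_span_first_two[OF k(1) k'(1)] xy by metis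
    then show False using first_two_columns_not_in_span[OF Is v(1)] xy v(2) by blast
  qed
qed

lemma indep_tight_family: "tight_family U \<Omega> indep"
  unfolding tight_family_def
proof (intro conjI ballI allI impI)
  show "indep \<subseteq> subtransversals U \<Omega>" using indep_iff by blast
  fix X Y assume X: "X \<in> indep" and Y: "Y \<subseteq> X"
  have Xs: "X \<in> subtransversals U \<Omega>" and Xi: "gf2_indep col X" using X indep_iff by auto
  have fX: "finite X" using finite_subset[OF subtransversal_ground[OF Xs] finite_U] .
  show "Y \<in> indep"
    using indep_iff subtransversal_subset[OF finite_U Xs Y] gf2_indep_subset[OF Xi Y fX] by blast
next
  show "tight_indep \<Omega> indep"
    unfolding tight_indep_def
  proof (intro ballI impI allI)
    fix S \<omega> assume S: "S \<in> indep" and c: "card S = card \<Omega> - 1" and w: "\<omega> \<in> \<Omega>" and d: "\<omega> \<inter> S = {}"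
    have Ss: "S \<in> subtransversals U \<Omega>" and Si: "gf2_indep col S" using S indep_iff by auto
    have fS: "finite S" using finite_subset[OF subtransversal_ground[OF Ss] finite_U] .
    obtain x where x: "x \<in> \<omega>" "col x \<in> gf2_span col S"
      using near_transversal_spans_some_column[OF Ss c w d] by blast
    then have "\<not> gf2_indep col (insert x S)" using gf2_indep_insert[OF fS _ Si] d by blast
    then show "\<exists>x\<in>\<omega>. insert x S \<notin> indep" using x indep_iff by blast
  qed
qed (rule indep_skew_extensible)

lemma indep_tight: "tight U \<Omega> indep"
  unfolding tight_def
proof (intro conjI ballI impI allI)
  show "nondegenerate \<Omega>"
    unfolding nondegenerate_def classes_eq using card_vclass by simp
  fix S \<omega> assume Ss: "S \<in> subtransversals U \<Omega>" and c: "card S = card \<Omega> - 1"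
    and w: "\<omega> \<in> \<Omega>" and d: "\<omega> \<inter> S = {}"
  obtain x where x: "x \<in> \<omega>" "col x \<in> gf2_span col S"
    using near_transversal_spans_some_column[OF Ss c w d] by blast
  have "insert x S \<in> subtransversals U \<Omega>"
    using subtransversal_insert[OF finite_U partition Ss w x(1)] d by blast
  then show "\<exists>x\<in>\<omega>. mm_rank indep (insert x S) = mm_rank indep S"
    using mm_rank_insert_span[OF finite_U _ x(2) refl] x(1) by blast
qed

lemma sheltering: "sheltering U (column_matroid U col) \<Omega>"
  unfolding sheltering_def
proof (intro conjI ballI impI)
  show "matroid U (column_matroid U col)" by (rule matroid_column_matroid[OF finite_U])
  show "is_partition U \<Omega>" by (rule partition)
  fix I \<omega> x y assume I: "I \<in> column_matroid U col \<inter> subtransversals U \<Omega>"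
    and "\<omega> \<in> \<Omega>" "x \<in> \<omega>" "y \<in> \<omega>" "x \<noteq> y \<and> \<omega> \<inter> I = {}"
  moreover have "I \<in> indep" using I unfolding sheltered_indep_def by blast
  ultimately have "insert x I \<in> indep \<or> insert y I \<in> indep"
    using indep_skew_extensible[unfolded skew_extensible_def, rule_format, of I \<omega> x y] by blast
  then show "insert x I \<in> column_matroid U col \<or> insert y I \<in> column_matroid U col"
    unfolding sheltered_indep_def by blast
qed

lemma rank_le_classes: "matroid_rank (column_matroid U col) \<le> card \<Omega>"
proof -
  have "column_matroid U col \<subseteq> Pow U" unfolding column_matroid_def by blast
  then have fin: "finite (column_matroid U col)" using finite_U finite_subset by blast
  have "card X \<le> card V" if "X \<in> column_matroid U col" for X
  proof -
    have X: "X \<subseteq> U" "gf2_indep col X" using that unfolding column_matroid_def by auto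
    show ?thesis
      using gf2_indep_card_le_rows[OF finite_V finite_subset[OF X(1) finite_U] X(2)] X(1) col_outside
      by blast
  qed
  moreover have "{} \<in> column_matroid U col" unfolding column_matroid_def by simp
  ultimately show ?thesis
    unfolding matroid_rank_def card_classes using fin by (intro Max.boundedI) auto
qed

lemma binary: "binary_matroid U (column_matroid U col)"
proof -
  obtain n where n: "\<forall>i\<in>V. i < n" using finite_V finite_nat_set_iff_bounded by auto
  define col' where "col' = (\<lambda>x. if x \<in> U then col x else (\<lambda>_. (0::bit)))"
  have "\<forall>x i. n \<le> i \<longrightarrow> col' x i = 0"
    using n col_outside unfolding col'_def by (metis leD)
  moreover have "gf2_indep col X \<longleftrightarrow> gf2_indep col' X" if "X \<subseteq> U" for X
    using that by (intro gf2_indep_cong) (auto simp: col'_def)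
  then have "column_matroid U col = column_matroid U col'"
    unfolding column_matroid_def by blast
  ultimately show ?thesis unfolding binary_matroid_def by blast
qed

end

section \<open>Tight binary 3-matroids\<close>

locale tight_binary_3_matroid =
  fixes U :: "'a set" and \<Omega> :: "'a set set" and \<I> :: "'a set set" and col0 :: "'a \<Rightarrow> nat \<Rightarrow> bit"
  assumes three: "q_matroid 3 U \<Omega> \<I>" and tight: "tight U \<Omega> \<I>"
    and binary: "\<I> = sheltered_indep U (column_matroid U col0) \<Omega>"
begin

lemma multimatroid: "multimatroid U \<Omega> \<I>"
  using three unfolding q_matroid_def by blast

lemma card_class: "\<omega> \<in> \<Omega> \<Longrightarrow> card \<omega> = 3"
  using three unfolding q_matroid_def by blast

lemma finite_U: "finite U"
  using multimatroid unfolding multimatroid_def by blast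

lemma partition: "is_partition U \<Omega>"
  using multimatroid unfolding multimatroid_def by blast

lemma indep_iff: "X \<in> \<I> \<longleftrightarrow> X \<in> subtransversals U \<Omega> \<and> gf2_indep col0 X"
  unfolding binary sheltered_indep_def column_matroid_def using subtransversal_ground by blast

lemma indep_subset: "X \<in> \<I> \<Longrightarrow> Y \<subseteq> X \<Longrightarrow> Y \<in> \<I>"
proof -
  assume X: "X \<in> \<I>" and Y: "Y \<subseteq> X"
  then have Xs: "X \<in> subtransversals U \<Omega>" and Xi: "gf2_indep col0 X" using indep_iff by auto
  have "finite X" using finite_subset[OF subtransversal_ground[OF Xs] finite_U] .
  then show "Y \<in> \<I>" using indep_iff subtransversal_subset[OF finite_U Xs Y] gf2_indep_subset[OF Xi Y] by blast
qed

lemma skew: "skew_extensible \<Omega> \<I>"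
  using multimatroid unfolding multimatroid_def skew_extensible_def by blast

lemma indep_tight_family: "tight_family U \<Omega> \<I>"
proof -
  have sub: "\<I> \<subseteq> subtransversals U \<Omega>" using indep_iff by blast
  have her: "\<forall>X\<in>\<I>. \<forall>Y. Y \<subseteq> X \<longrightarrow> Y \<in> \<I>" using indep_subset by blast
  show ?thesis
    unfolding tight_family_def using sub her skew tight_imp_tight_indep[OF finite_U sub tight her] by blast
qed

definition T0 :: "'a set" where "T0 = (SOME T. T \<in> \<I> \<and> (\<forall>\<omega>\<in>\<Omega>. T \<inter> \<omega> \<noteq> {}))"

lemma T0: "T0 \<in> \<I>" "\<forall>\<omega>\<in>\<Omega>. T0 \<inter> \<omega> \<noteq> {}"
proof -
  have two: "\<forall>\<omega>\<in>\<Omega>. \<exists>e1 e2. e1 \<in> \<omega> \<inter> U \<and> e2 \<in> \<omega> \<inter> U \<and> e1 \<noteq> e2"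
  proof
    fix \<omega> assume w: "\<omega> \<in> \<Omega>"
    then obtain x y z where "\<omega> = {x, y, z}" "x \<noteq> y" using card_class card_3_iff by metis
    then show "\<exists>e1 e2. e1 \<in> \<omega> \<inter> U \<and> e2 \<in> \<omega> \<inter> U \<and> e1 \<noteq> e2"
      using partition_class_subset[OF partition w] by blast
  qed
  have empty: "{} \<in> \<I>" using indep_iff unfolding subtransversals_def by simp
  have sub: "\<I> \<subseteq> subtransversals U \<Omega>" using indep_iff by blast
  have "\<exists>S\<in>\<I>. {} \<subseteq> S \<and> S - {} \<subseteq> U \<inter> \<Union>\<Omega> \<and> (\<forall>\<omega>\<in>\<Omega>. S \<inter> \<omega> \<noteq> {})"
    by (rule extend_to_classes[OF partition skew partition_finite[OF partition finite_U]
          subset_refl empty]) (use two in simp_all)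
  then obtain S where "S \<in> \<I>" "\<forall>\<omega>\<in>\<Omega>. S \<inter> \<omega> \<noteq> {}" by blast
  then have "\<exists>T. T \<in> \<I> \<and> (\<forall>\<omega>\<in>\<Omega>. T \<inter> \<omega> \<noteq> {})" by blast
  then have "T0 \<in> \<I> \<and> (\<forall>\<omega>\<in>\<Omega>. T0 \<inter> \<omega> \<noteq> {})" unfolding T0_def by (rule someI_ex)
  then show "T0 \<in> \<I>" "\<forall>\<omega>\<in>\<Omega>. T0 \<inter> \<omega> \<noteq> {}" by auto
qed

lemma T0_subtransversal: "T0 \<in> subtransversals U \<Omega>"
  using T0(1) indep_iff by blast

definition V :: "nat set" where "V = {0..<card \<Omega>}"

definition cls :: "nat \<Rightarrow> 'a set" where "cls = (SOME c. bij_betw c V \<Omega>)"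

lemma finite_V: "finite V"
  unfolding V_def by simp

lemma bij_cls: "bij_betw cls V \<Omega>"
proof -
  have "\<exists>c. bij_betw c V \<Omega>"
    unfolding V_def using ex_bij_betw_nat_finite[OF partition_finite[OF partition finite_U]] .
  then show ?thesis unfolding cls_def by (rule someI_ex)
qed

lemma cls_in: "i \<in> V \<Longrightarrow> cls i \<in> \<Omega>"
  using bij_cls bij_betwE by blast

lemma cls_surj: "\<omega> \<in> \<Omega> \<Longrightarrow> \<exists>i\<in>V. \<omega> = cls i"
  using bij_cls unfolding bij_betw_def by blast

lemma cls_disjoint: "i \<in> V \<Longrightarrow> j \<in> V \<Longrightarrow> x \<in> cls i \<Longrightarrow> x \<in> cls j \<Longrightarrow> i = j"
  using partition_class_unique[OF partition cls_in cls_in] bij_cls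
  unfolding bij_betw_def inj_on_def by metis

lemma cls_subset: "i \<in> V \<Longrightarrow> cls i \<subseteq> U"
  using partition_class_subset[OF partition cls_in] .

text \<open>Each class consists of its element t of T0, an element a making T0 - t + a dependent,
  which exists by tightness, and the remaining element b.\<close>

definition elt_t :: "nat \<Rightarrow> 'a" where "elt_t i = (SOME x. x \<in> T0 \<inter> cls i)"
definition elt_a :: "nat \<Rightarrow> 'a" where "elt_a i = (SOME x. x \<in> cls i \<and> insert x (T0 - {elt_t i}) \<notin> \<I>)"
definition elt_b :: "nat \<Rightarrow> 'a" where "elt_b i = (SOME x. x \<in> cls i - {elt_t i, elt_a i})"

lemma T0_cls: "i \<in> V \<Longrightarrow> T0 \<inter> cls i = {elt_t i}"
proof -
  assume i: "i \<in> V"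
  have "\<exists>x. x \<in> T0 \<inter> cls i" using T0(2) cls_in[OF i] by blast
  then have t: "elt_t i \<in> T0 \<inter> cls i" unfolding elt_t_def by (rule someI_ex)
  then show ?thesis
    using subtransversal_class_unique[OF finite_U T0_subtransversal cls_in[OF i]] by blast
qed

lemma elt_a:
  assumes i: "i \<in> V"
  shows "elt_a i \<in> cls i" "insert (elt_a i) (T0 - {elt_t i}) \<notin> \<I>" "elt_a i \<noteq> elt_t i"
proof -
  have t: "elt_t i \<in> T0" "cls i \<inter> (T0 - {elt_t i}) = {}" using T0_cls[OF i] by auto
  have fin: "finite T0" using finite_subset[OF subtransversal_ground[OF T0_subtransversal] finite_U] .
  have "{\<omega>\<in>\<Omega>. T0 \<inter> \<omega> \<noteq> {}} = \<Omega>" using T0(2) by blast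
  then have "card T0 = card \<Omega>" using card_subtransversal[OF finite_U partition T0_subtransversal] by simp
  then have "card (T0 - {elt_t i}) = card \<Omega> - 1" using t(1) fin by simp
  moreover have "T0 - {elt_t i} \<in> \<I>" using indep_subset[OF T0(1)] by blast
  ultimately have "\<exists>x. x \<in> cls i \<and> insert x (T0 - {elt_t i}) \<notin> \<I>"
    using indep_tight_family cls_in[OF i] t(2) unfolding tight_family_def tight_indep_def by blast
  then have a: "elt_a i \<in> cls i \<and> insert (elt_a i) (T0 - {elt_t i}) \<notin> \<I>"
    unfolding elt_a_def by (rule someI_ex)
  then show "elt_a i \<in> cls i" "insert (elt_a i) (T0 - {elt_t i}) \<notin> \<I>" by auto
  show "elt_a i \<noteq> elt_t i" using a T0(1) t(1) insert_Diff by fastforce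
qed

lemma cls_eq:
  assumes i: "i \<in> V"
  shows "cls i = {elt_t i, elt_a i, elt_b i}" "elt_b i \<noteq> elt_t i" "elt_b i \<noteq> elt_a i"
proof -
  have c: "card (cls i) = 3" using card_class[OF cls_in[OF i]] .
  have ta: "{elt_t i, elt_a i} \<subseteq> cls i" using T0_cls[OF i] elt_a(1)[OF i] by blast
  have "\<not> cls i \<subseteq> {elt_t i, elt_a i}"
  proof
    assume "cls i \<subseteq> {elt_t i, elt_a i}"
    then have "card (cls i) \<le> card {elt_t i, elt_a i}" by (intro card_mono) auto
    also have "\<dots> \<le> 2" by (simp add: card_insert_if)
    finally show False using c by simp
  qed
  then have "\<exists>x. x \<in> cls i - {elt_t i, elt_a i}" by blast
  then have b: "elt_b i \<in> cls i - {elt_t i, elt_a i}" unfolding elt_b_def by (rule someI_ex)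
  then show "elt_b i \<noteq> elt_t i" "elt_b i \<noteq> elt_a i" by auto
  have "card {elt_t i, elt_a i, elt_b i} = 3" using b elt_a(3)[OF i] by auto
  then show "cls i = {elt_t i, elt_a i, elt_b i}"
    using card_subset_eq[of "cls i" "{elt_t i, elt_a i, elt_b i}"] c ta b card.infinite by fastforce
qed

lemma U_cases:
  assumes "x \<in> U" obtains i where "i \<in> V" "x = elt_t i \<or> x = elt_a i \<or> x = elt_b i"
proof -
  obtain \<omega> where "\<omega> \<in> \<Omega>" "x \<in> \<omega>" using partition_class_exists[OF partition assms] by blast
  then obtain i where "i \<in> V" "x \<in> cls i" using cls_surj by blast
  then show ?thesis using that cls_eq(1) by blast
qed

lemma T0_eq: "T0 = elt_t ` V"
proof
  show "T0 \<subseteq> elt_t ` V"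
  proof
    fix x assume x: "x \<in> T0"
    then obtain i where i: "i \<in> V" "x \<in> cls i"
      using U_cases[of x] subtransversal_ground[OF T0_subtransversal] cls_eq(1) by (metis insertCI subsetD)
    then show "x \<in> elt_t ` V" using T0_cls x by blast
  qed
qed (use T0_cls in blast)

lemma inj_elt_t: "inj_on elt_t V"
  by (rule inj_onI) (metis T0_cls IntD2 insertI1 cls_disjoint)

lemma elt_t_in_cls: "i \<in> V \<Longrightarrow> elt_t i \<in> cls i"
  using T0_cls by blast

definition lab :: "nat \<Rightarrow> nat \<Rightarrow> 'a" where
  "lab k i = (if k = 1 then elt_t i else if k = 2 then elt_a i else elt_b i)"

lemma lab_in_cls: "k \<in> {1,2,3} \<Longrightarrow> i \<in> V \<Longrightarrow> lab k i \<in> cls i"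
  unfolding lab_def using cls_eq by auto

lemma inj_lab: "inj_on (\<lambda>(k, v). lab k v) ({1,2,3} \<times> V)"
proof (rule inj_onI, clarify)
  fix k v k' v' assume k: "k \<in> {1,2,3}" "k' \<in> {1,2,3}" and v: "v \<in> V" "v' \<in> V"
    and eq: "lab k v = lab k' v'"
  then have "v = v'" using lab_in_cls cls_disjoint by metis
  then show "k = k' \<and> v = v'" using eq k v cls_eq[of v] elt_a(3)[of v] unfolding lab_def by auto
qed

lemma lab_ground: "U = (\<lambda>(k, v). lab k v) ` ({1,2,3} \<times> V)"
proof
  show "U \<subseteq> (\<lambda>(k, v). lab k v) ` ({1,2,3} \<times> V)"
  proof
    fix x assume "x \<in> U"
    then obtain i where i: "i \<in> V" "x = lab 1 i \<or> x = lab 2 i \<or> x = lab 3 i"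
      using U_cases unfolding lab_def by auto
    then show "x \<in> (\<lambda>(k, v). lab k v) ` ({1,2,3} \<times> V)" by force
  qed
qed (use lab_in_cls cls_subset in fastforce)

lemma lab_classes: "\<Omega> = {{lab 1 v, lab 2 v, lab 3 v} | v. v \<in> V}"
proof -
  have "\<Omega> = cls ` V" using bij_cls unfolding bij_betw_def by simp
  also have "\<dots> = (\<lambda>v. {lab 1 v, lab 2 v, lab 3 v}) ` V"
    by (rule image_cong) (auto simp: cls_eq lab_def)
  finally show ?thesis by blast
qed

definition basis :: "nat \<Rightarrow> nat \<Rightarrow> bit" where "basis i = col0 (elt_t i)"

lemma basis_indep: "gf2_indep basis V"
  using T0(1) indep_iff gf2_indep_reindex[OF inj_elt_t] unfolding T0_eq basis_def by blast

lemma elt_a_in_span: "j \<in> V \<Longrightarrow> col0 (elt_a j) \<in> gf2_span basis (V - {j})"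
proof -
  assume j: "j \<in> V"
  let ?S = "T0 - {elt_t j}"
  have S: "?S \<in> \<I>" "?S \<inter> cls j = {}" using indep_subset[OF T0(1)] T0_cls[OF j] by auto
  then have Ss: "?S \<in> subtransversals U \<Omega>" and Si: "gf2_indep col0 ?S" using indep_iff by auto
  have "insert (elt_a j) ?S \<in> subtransversals U \<Omega>"
    using subtransversal_insert[OF finite_U partition Ss cls_in[OF j] elt_a(1)[OF j] S(2)] .
  then have "\<not> gf2_indep col0 (insert (elt_a j) ?S)" using elt_a(2)[OF j] indep_iff by blast
  moreover have "finite ?S" using finite_subset[OF subtransversal_ground[OF Ss] finite_U] .
  moreover have "elt_a j \<notin> ?S" using S(2) elt_a(1)[OF j] by blast
  ultimately have "col0 (elt_a j) \<in> gf2_span col0 ?S" using gf2_indep_insert[OF _ _ Si] by blast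
  moreover have "?S = elt_t ` (V - {j})" unfolding T0_eq using inj_elt_t j by (auto simp: inj_on_def)
  moreover have "gf2_span col0 (elt_t ` (V - {j})) = gf2_span basis (V - {j})"
    using inj_on_subset[OF inj_elt_t] by (intro gf2_span_reindex) (auto simp: basis_def)
  ultimately show ?thesis by simp
qed

text \<open>A is the matrix of coordinates of the a-columns with respect to the basis given by the
  t-columns; its diagonal vanishes.\<close>

definition A :: "nat \<Rightarrow> nat \<Rightarrow> bit" where
  "A i j = (if i \<in> V \<and> j \<in> V \<and> i \<noteq> j
      then (SOME c. col0 (elt_a j) = gf2_comb basis (V - {j}) c) i else 0)"

lemma A_diag [simp]: "A j j = 0"
  unfolding A_def by simp

lemma elt_a_coords: "j \<in> V \<Longrightarrow> col0 (elt_a j) = (\<lambda>r. \<Sum>i\<in>V. A i j * basis i r)"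
proof -
  assume j: "j \<in> V"
  define c where "c = (SOME c. col0 (elt_a j) = gf2_comb basis (V - {j}) c)"
  have "\<exists>c. col0 (elt_a j) = gf2_comb basis (V - {j}) c"
    using elt_a_in_span[OF j] unfolding gf2_span_def by blast
  then have "col0 (elt_a j) = gf2_comb basis (V - {j}) c" unfolding c_def by (rule someI_ex)
  also have "\<dots> = gf2_comb basis V (\<lambda>i. if i \<in> V - {j} then c i else 0)"
    by (rule gf2_comb_extend_zero[OF finite_V]) blast
  also have "\<dots> = gf2_comb basis V (\<lambda>i. A i j)"
    by (rule gf2_comb_cong) (use j in \<open>auto simp: A_def c_def\<close>)
  finally show ?thesis unfolding gf2_comb_def .
qed

definition colp :: "'a \<Rightarrow> nat \<Rightarrow> bit" where
  "colp x = (if x \<in> U then (\<lambda>(k, v). IAAI_column A V k v) (the_inv_into ({1,2,3} \<times> V) (\<lambda>(k, v). lab k v) x)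
     else (\<lambda>_. 0))"

lemma colp_lab: "k \<in> {1,2,3} \<Longrightarrow> v \<in> V \<Longrightarrow> colp (lab k v) = IAAI_column A V k v"
  using the_inv_into_f_f[OF inj_lab, of "(k, v)"] lab_in_cls cls_subset unfolding colp_def by auto

lemma colp_outside: "i \<notin> V \<Longrightarrow> colp x i = 0"
  unfolding colp_def IAAI_column_def by (auto split: prod.split)

lemma col0_coords:
  assumes "x \<in> T0 \<union> elt_a ` V"
  shows "col0 x = (\<lambda>r. \<Sum>i\<in>V. colp x i * basis i r)"
proof -
  consider (t) k where "k \<in> V" "x = lab 1 k" | (a) j where "j \<in> V" "x = lab 2 j"
    using assms unfolding T0_eq lab_def by auto
  then show ?thesis
  proof cases
    case t
    then have "colp x i * basis i r = (if i = k then basis k r else 0)" if "i \<in> V" for i r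
      using that colp_lab[of 1 k] by (simp add: IAAI_column_def IAAI_col_def)
    then show ?thesis using t finite_V by (simp add: basis_def lab_def sum.delta cong: sum.cong)
  next
    case a
    then have "colp x i = A i j" if "i \<in> V" for i
      using that colp_lab[of 2 j] by (simp add: IAAI_column_def IAAI_col_def)
    then show ?thesis using a elt_a_coords[OF a(1)] by (simp add: lab_def cong: sum.cong)
  qed
qed

lemma indep_iff_colp:
  assumes "X \<in> subtransversals U \<Omega>" "X \<subseteq> T0 \<union> elt_a ` V"
  shows "X \<in> \<I> \<longleftrightarrow> gf2_indep colp X"
proof -
  have "\<forall>x\<in>X. col0 x = (\<lambda>r. \<Sum>i\<in>V. colp x i * basis i r)" using col0_coords assms(2) by blast
  moreover have "\<forall>x\<in>X. \<forall>i. i \<notin> V \<longrightarrow> colp x i = 0" using colp_outside by blast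
  ultimately show ?thesis using indep_iff assms(1) gf2_indep_coordinates[OF basis_indep] by blast
qed

lemma insert_elt_a_indep_iff:
  assumes P: "P \<subseteq> V" and j: "j \<in> V" "j \<notin> P"
  shows "insert (elt_a j) (elt_t ` P) \<in> \<I> \<longleftrightarrow> (\<exists>r\<in>V - P. A r j \<noteq> 0)"
proof -
  let ?X = "elt_t ` P"
  have XT: "?X \<subseteq> T0" using P T0_eq by blast
  have Xs: "?X \<in> subtransversals U \<Omega>" using subtransversal_subset[OF finite_U T0_subtransversal XT] .
  have Xi: "gf2_indep colp ?X" using indep_iff_colp[OF Xs] XT indep_subset[OF T0(1) XT] by blast
  have disj: "?X \<inter> cls j = {}" using cls_disjoint elt_t_in_cls P j by blast
  have aXs: "insert (elt_a j) ?X \<in> subtransversals U \<Omega>"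
    using subtransversal_insert[OF finite_U partition Xs cls_in[OF j(1)] elt_a(1)[OF j(1)] disj] .
  have "elt_a j \<notin> ?X" using disj elt_a(1)[OF j(1)] by blast
  moreover have "finite ?X" using finite_subset[OF P finite_V] by simp
  ultimately have iff: "insert (elt_a j) ?X \<in> \<I> \<longleftrightarrow> colp (elt_a j) \<notin> gf2_span colp ?X"
    using indep_iff_colp[OF aXs] XT j(1) gf2_indep_insert[OF _ _ Xi] by blast
  have "gf2_span colp ?X = gf2_span (IAAI_column A V 1) P"
    using inj_on_subset[OF inj_elt_t P] P colp_lab[of 1] by (intro gf2_span_reindex) (auto simp: lab_def)
  moreover have "colp (elt_a j) = IAAI_column A V 2 j" using colp_lab[of 2 j] j by (simp add: lab_def)
  moreover have "IAAI_column A V 2 j \<in> gf2_span (IAAI_column A V 1) P \<longleftrightarrow> (\<forall>r\<in>V - P. A r j = 0)"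
    unfolding gf2_span_unit_columns_iff[OF finite_subset[OF P finite_V] P]
    by (auto simp: IAAI_column_def IAAI_col_def)
  ultimately show ?thesis using iff by auto
qed

text \<open>Symmetry of A: if A i j = 1 but A j i = 0, the set consisting of a_j and the t-elements
  outside {i, j} is independent, but both of its extensions by the skew pair t_i, a_i are not.\<close>

lemma A_entry_sym:
  assumes i: "i \<in> V" and j: "j \<in> V" and Aij: "A i j = 1"
  shows "A j i = 1"
proof (rule ccontr)
  assume "A j i \<noteq> 1"
  then have Aji: "A j i = 0" by simp
  have ij: "i \<noteq> j" using Aij by auto
  define P where "P = V - {i, j}"
  define X where "X = insert (elt_a j) (elt_t ` P)"
  have "X \<in> \<I>" unfolding X_def using insert_elt_a_indep_iff[of P j] i j ij Aij by (auto simp: P_def)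
  moreover have "insert (elt_t i) X \<notin> \<I>"
  proof -
    have "insert (elt_t i) X = insert (elt_a j) (elt_t ` (V - {j}))"
      unfolding X_def P_def using i ij by blast
    then show ?thesis using insert_elt_a_indep_iff[of "V - {j}" j] j by auto
  qed
  moreover have "insert (elt_a i) X \<notin> \<I>"
  proof -
    have "V - P = {i, j}" unfolding P_def using i j by blast
    then have "insert (elt_a i) (elt_t ` P) \<notin> \<I>" using insert_elt_a_indep_iff[of P i] i Aji by (auto simp: P_def)
    then show ?thesis unfolding X_def using indep_subset by blast
  qed
  moreover have "cls i \<inter> X = {}"
    unfolding X_def P_def using cls_disjoint elt_t_in_cls elt_a(1) i j ij by blast
  ultimately show False
    using skew elt_t_in_cls[OF i] elt_a(1,3)[OF i] cls_in[OF i]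
    unfolding skew_extensible_def by metis
qed

lemma A_symmetric: "symmetric_on V A"
  unfolding symmetric_on_def using A_entry_sym by (metis bit_not_one_iff)

lemma representation: "IAAI_representation U \<Omega> V A lab colp"
  using finite_V A_symmetric inj_lab lab_ground lab_classes colp_lab
  by unfold_locales blast+

text \<open>Both families are tight, and off the transversal of b-elements they agree because the
  columns col0 and colp are related by the change of basis given by the t-columns.\<close>

lemma indep_eq: "\<I> = sheltered_indep U (column_matroid U colp) \<Omega>"
proof (rule tight_families_eq[OF partition finite_U _ _ indep_tight_family
      IAAI_representation.indep_tight_family[OF representation]])
  show "\<forall>\<omega>\<in>\<Omega>. 3 \<le> card \<omega>" using card_class by simp
  have Bcls: "elt_b ` V \<inter> cls i = {elt_b i}" if i: "i \<in> V" for i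
  proof
    show "elt_b ` V \<inter> cls i \<subseteq> {elt_b i}"
    proof
      fix x assume "x \<in> elt_b ` V \<inter> cls i"
      then obtain k where k: "k \<in> V" "x = elt_b k" "elt_b k \<in> cls i" by blast
      moreover have "elt_b k \<in> cls k" using cls_eq(1)[OF k(1)] by blast
      ultimately show "x \<in> {elt_b i}" using cls_disjoint[OF k(1) i] by blast
    qed
  qed (use i cls_eq(1)[OF i] in blast)
  show "elt_b ` V \<in> transversals U \<Omega>"
    unfolding transversals_def
  proof (intro CollectI conjI ballI)
    show "elt_b ` V \<subseteq> U" using cls_eq(1) cls_subset by blast
    fix \<omega> assume "\<omega> \<in> \<Omega>"
    then obtain i where "i \<in> V" "\<omega> = cls i" using cls_surj by blast
    then show "card (elt_b ` V \<inter> \<omega>) = 1" using Bcls by simp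
  qed
  show "\<forall>Z\<in>subtransversals U \<Omega>. Z \<inter> elt_b ` V = {} \<longrightarrow>
      (Z \<in> \<I> \<longleftrightarrow> Z \<in> sheltered_indep U (column_matroid U colp) \<Omega>)"
  proof (intro ballI impI)
    fix Z assume Z: "Z \<in> subtransversals U \<Omega>" "Z \<inter> elt_b ` V = {}"
    have "Z \<subseteq> T0 \<union> elt_a ` V"
    proof
      fix z assume z: "z \<in> Z"
      then have "z \<in> U" using subtransversal_ground[OF Z(1)] by blast
      then obtain i where "i \<in> V" "z = elt_t i \<or> z = elt_a i \<or> z = elt_b i" by (rule U_cases)
      then show "z \<in> T0 \<union> elt_a ` V" using z Z(2) T0_eq by blast
    qed
    then show "Z \<in> \<I> \<longleftrightarrow> Z \<in> sheltered_indep U (column_matroid U colp) \<Omega>"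
      using indep_iff_colp[OF Z(1)] IAAI_representation.indep_iff[OF representation] Z(1) by blast
  qed
qed

lemma IAAI_sheltered: "IAAI_sheltered U \<Omega> \<I>"
  unfolding IAAI_sheltered_def
proof (intro exI conjI)
  show "sheltering U (column_matroid U colp) \<Omega>"
    by (rule IAAI_representation.sheltering[OF representation])
  show "\<forall>k\<in>{1,2,3}. \<forall>v\<in>V. \<forall>w\<in>V. colp (lab k v) w = IAAI_col A k v w"
    using colp_lab unfolding IAAI_column_def by simp
  show "\<forall>x\<in>U. \<forall>w. w \<notin> V \<longrightarrow> colp x w = 0" using colp_outside by blast
qed (use indep_eq finite_V A_symmetric inj_lab lab_ground lab_classes in \<open>auto simp: symmetric_on_def\<close>)

end

lemma tight_binary_imp_IAAI_sheltered:
  assumes "q_matroid 3 U \<Omega> \<I>" "tight U \<Omega> \<I>" "binary_mm U \<Omega> \<I>"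
  shows "IAAI_sheltered U \<Omega> \<I>"
proof -
  obtain M where "binary_matroid U M" "\<I> = sheltered_indep U M \<Omega>"
    using assms(3) unfolding binary_mm_def by blast
  then obtain col0 :: "_ \<Rightarrow> nat \<Rightarrow> bit" where "\<I> = sheltered_indep U (column_matroid U col0) \<Omega>"
    unfolding binary_matroid_def by blast
  then show ?thesis
    using tight_binary_3_matroid.IAAI_sheltered tight_binary_3_matroid.intro assms(1,2) by blast
qed

lemma IAAI_sheltered_imp_tight_strictly_binary:
  fixes U :: "'a set"
  assumes "IAAI_sheltered U \<Omega> \<I>"
  shows "tight U \<Omega> \<I> \<and> strictly_binary_mm U \<Omega> \<I>"
proof -
  obtain M and V :: "nat set" and A :: "nat \<Rightarrow> nat \<Rightarrow> bit" and u :: "nat \<Rightarrow> nat \<Rightarrow> 'a"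
    and col :: "'a \<Rightarrow> nat \<Rightarrow> bit" where sh: "sheltering U M \<Omega>" and I: "\<I> = sheltered_indep U M \<Omega>"
    and fin: "finite V" and sym: "\<forall>v\<in>V. \<forall>w\<in>V. A v w = A w v"
    and inj: "inj_on (\<lambda>(k, v). u k v) ({1,2,3} \<times> V)"
    and ground: "U = (\<lambda>(k, v). u k v) ` ({1,2,3} \<times> V)"
    and classes: "\<Omega> = {{u 1 v, u 2 v, u 3 v} | v. v \<in> V}"
    and col: "\<forall>k\<in>{1,2,3}. \<forall>v\<in>V. \<forall>w\<in>V. col (u k v) w = IAAI_col A k v w"
    and outside: "\<forall>x\<in>U. \<forall>w. w \<notin> V \<longrightarrow> col x w = 0"
    and M: "M = column_matroid U col"
    using assms unfolding IAAI_sheltered_def by (elim exE conjE) (rule that, assumption+)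
  have "\<forall>k\<in>{1,2,3}. \<forall>v\<in>V. col (u k v) = IAAI_column A V k v"
    using col outside ground unfolding IAAI_column_def by (fastforce simp: fun_eq_iff)
  then interpret IAAI_representation U \<Omega> V A u col
    using fin sym inj ground classes by unfold_locales (simp_all add: symmetric_on_def)
  show ?thesis
    unfolding strictly_binary_mm_def strict_sheltering_def I M
    using indep_tight sh binary rank_le_classes M by blast
qed

theorem theorem2p10:
  assumes "q_matroid 3 U \<Omega> \<I>"
  shows "((tight U \<Omega> \<I> \<and> binary_mm U \<Omega> \<I>) \<longleftrightarrow> (tight U \<Omega> \<I> \<and> strictly_binary_mm U \<Omega> \<I>))
       \<and> ((tight U \<Omega> \<I> \<and> binary_mm U \<Omega> \<I>) \<longleftrightarrow> IAAI_sheltered U \<Omega> \<I>)"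
proof -
  have "strictly_binary_mm U \<Omega> \<I> \<Longrightarrow> binary_mm U \<Omega> \<I>"
    unfolding strictly_binary_mm_def binary_mm_def strict_sheltering_def by blast
  then show ?thesis
    using tight_binary_imp_IAAI_sheltered[OF assms] IAAI_sheltered_imp_tight_strictly_binary by blast
qed

end
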